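(* Let $n\ge 1$, $\beta\ge 1$, $\epsilon>0$, and let $H=\sum_{1\le i<j\le n}(-a_{ij}X_iX_j+b_{ij}Y_iY_j)+\sum_{i=1}^n d_iZ_i$ be an $n$-qubit Hamiltonian with $|b_{ij}|\le a_{ij}\le 1/2$ and $|d_i|\le 1$. Let $L=\mathcal{O}(n^2\beta^2\epsilon^{-1})$ be the number of Trotter steps, $\delta=\beta/(2L)$, and let $M_1,M_2$, $M=M_1+M_2=\mathcal{O}(n^4\beta^2\epsilon^{-1})$, $\mathcal{C}_0$, $\mathcal{C}_2$ and the distribution $\pi$ on $\mathcal{C}_0\cup\mathcal{C}_2$ be as defined in the context. Then $$\frac{\sum_{\xi\in\mathcal{C}_2}\pi(\xi)}{\sum_{\xi\in\mathcal{C}_0}\pi(\xi)}=\mathcal{O}(n^4\beta^2\epsilon^{-1}).$$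
   Context: Trotterization: $C=\prod_{1\le i<j\le n}\big(I+\delta(a_{ij}X_iX_j-b_{ij}Y_iY_j)\big)\prod_{i=1}^n(I-\delta d_iZ_i)$, and $(CC^\dagger)^L$ is written as an ordered product $\prod_{m=1}^M O_m$ of one-qubit operators (of the form $I-\delta d_iZ_i$; $M_1$ of them) and two-qubit operators (of the form $I+\delta(a_{ij}X_iX_j-b_{ij}Y_iY_j)$; $M_2$ of them). A path-integral configuration is a string $(\sigma_1,\dots,\sigma_M)$ of computational basis states $\sigma_m\in\{0,1\}^n$, with weight $W(\sigma_1,\dots,\sigma_M)=\prod_{m=1}^M\langle\sigma_m|O_m|\sigma_{m+1}\rangle$, $\sigma_{M+1}:=\sigma_1$ (nonnegative since $|b_{ij}|\le a_{ij}$). $\mathcal{C}_0$ is the set of configurations with nonzero weight; $\sum_{\gamma\in\mathcal{C}_0}W(\gamma)=\mathrm{Tr}[(CC^\dagger)^L]$. Each qubit's imaginary-time line (periodic in $m$) is cut by the operators acting on that qubit into segments; each operator has one "leg" per qubit it acts on on each side (2 legs for a one-qubit operator, 4 for a two-qubit operator), and two operators are "neighbors" if a segment connects a leg of one to a leg of the other. An extended configuration in $\mathcal{C}_2$ consists of two additional Pauli-$X$ operators ("worm heads") inserted into the operator sequence, each located on some segment of some qubit, the two not lying on the same segment (so they are not neighbors), together with a string of basis states; configurations are identified if the worm heads can be slid to the same positions along the imaginary-time direction without passing through an operator acting on that qubit. Its weight is the product of the matrix elements of all operators $O_m$ and of the inserted $X$'s (each $X$ contributes a factor $1$ and flips the state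 of its qubit), i.e. the product of the $O_m$ matrix elements with the qubit states consistent along segments except flipped across each worm head; $\mathcal{C}_2$ is the set of such extended configurations with nonzero weight. $\pi(\gamma)=W(\gamma)/W_{\mathrm{total}}$ for $\gamma\in\mathcal{C}_0$ and $\pi(\gamma)=\frac{2}{M_1+2M_2}\,W(\gamma)/W_{\mathrm{total}}$ for $\gamma\in\mathcal{C}_2$, where $W_{\mathrm{total}}=\sum_{\gamma\in\mathcal{C}_0}W(\gamma)+\frac{2}{M_1+2M_2}\sum_{\gamma\in\mathcal{C}_2}W(\gamma)$. *)

theory Defs
  imports Complex_Main
begin

(* Qubits are indexed 0..n-1. A computational basis state is a function
   nat => bool (True = |1>), with value False outside {..<n}. *)

datatype trot_op = OneQ nat | TwoQ nat nat
  (* OneQ i   : I - delta d_i Z_i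
     TwoQ i j : I + delta (a_ij X_i X_j - b_ij Y_i Y_j), with i < j *)

fun acts :: "trot_op \<Rightarrow> nat set" where
  "acts (OneQ i) = {i}"
| "acts (TwoQ i j) = {i, j}"

fun is_one :: "trot_op \<Rightarrow> bool" where
  "is_one (OneQ i) = True"
| "is_one (TwoQ i j) = False"

definition flip :: "nat set \<Rightarrow> (nat \<Rightarrow> bool) \<Rightarrow> (nat \<Rightarrow> bool)" where
  "flip A \<sigma> = (\<lambda>i. if i \<in> A then \<not> \<sigma> i else \<sigma> i)"

(* matrix element <sigma| O |tau> *)
fun elem :: "real \<Rightarrow> (nat \<Rightarrow> nat \<Rightarrow> real) \<Rightarrow> (nat \<Rightarrow> nat \<Rightarrow> real) \<Rightarrow> (nat \<Rightarrow> real)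
             \<Rightarrow> trot_op \<Rightarrow> (nat \<Rightarrow> bool) \<Rightarrow> (nat \<Rightarrow> bool) \<Rightarrow> real" where
  "elem \<delta> a b d (OneQ i) \<sigma> \<tau> =
     (if \<sigma> = \<tau> then 1 - \<delta> * d i * (if \<sigma> i then -1 else 1) else 0)"
| "elem \<delta> a b d (TwoQ i j) \<sigma> \<tau> =
     (if \<sigma> = \<tau> then 1
      else if \<tau> = flip {i, j} \<sigma>
        then \<delta> * (a i j + (if \<sigma> i = \<sigma> j then b i j else - b i j))
      else 0)"

(* ordered factors of C: prod_{i<j} (lexicographic) then prod_i *)
definition qpairs :: "nat \<Rightarrow> (nat \<times> nat) list" where
  "qpairs n = concat (map (\<lambda>i. map (\<lambda>j. (i, j)) [Suc i..<n]) [0..<n])"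

definition Cseq :: "nat \<Rightarrow> trot_op list" where
  "Cseq n = map (\<lambda>(i, j). TwoQ i j) (qpairs n) @ map OneQ [0..<n]"

(* (C C^dagger)^L: every factor is Hermitian, so C^dagger is the reversed product *)
definition ops :: "nat \<Rightarrow> nat \<Rightarrow> trot_op list" where
  "ops n L = concat (replicate L (Cseq n @ rev (Cseq n)))"

definition M1 :: "nat \<Rightarrow> nat \<Rightarrow> nat" where
  "M1 n L = length (filter is_one (ops n L))"

definition M2 :: "nat \<Rightarrow> nat \<Rightarrow> nat" where
  "M2 n L = length (filter (\<lambda>x. \<not> is_one x) (ops n L))"

definition basis_states :: "nat \<Rightarrow> (nat \<Rightarrow> bool) set" where
  "basis_states n = {\<sigma>. \<forall>i\<ge>n. \<not> \<sigma> i}"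

(* strings (sigma_1,...,sigma_M), 0-indexed, sigma_{M+1} := sigma_1 *)
definition configs :: "nat \<Rightarrow> nat \<Rightarrow> (nat \<Rightarrow> bool) list set" where
  "configs n L = {\<sigma>s. length \<sigma>s = length (ops n L) \<and> set \<sigma>s \<subseteq> basis_states n}"

definition W0 :: "nat \<Rightarrow> nat \<Rightarrow> real \<Rightarrow> (nat \<Rightarrow> nat \<Rightarrow> real) \<Rightarrow> (nat \<Rightarrow> nat \<Rightarrow> real)
                  \<Rightarrow> (nat \<Rightarrow> real) \<Rightarrow> (nat \<Rightarrow> bool) list \<Rightarrow> real" where
  "W0 n L \<delta> a b d \<sigma>s =
     (let M = length (ops n L) in
      \<Prod>m<M. elem \<delta> a b d (ops n L ! m) (\<sigma>s ! m) (\<sigma>s ! ((m + 1) mod M)))"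

definition C0 :: "nat \<Rightarrow> nat \<Rightarrow> real \<Rightarrow> (nat \<Rightarrow> nat \<Rightarrow> real) \<Rightarrow> (nat \<Rightarrow> nat \<Rightarrow> real)
                  \<Rightarrow> (nat \<Rightarrow> real) \<Rightarrow> (nat \<Rightarrow> bool) list set" where
  "C0 n L \<delta> a b d = {\<sigma>s \<in> configs n L. W0 n L \<delta> a b d \<sigma>s \<noteq> 0}"

(* Segments: the segment of qubit q starting right after operator m (which acts on q)
   and running (cyclically) to the next operator acting on q. *)
definition segs :: "nat \<Rightarrow> nat \<Rightarrow> (nat \<times> nat) set" where
  "segs n L = {(m, q). m < length (ops n L) \<and> q \<in> acts (ops n L ! m)}"

(* Extended configuration: a set S of two distinct segments carrying the worm heads
   (each placed, canonically, right after the operator starting its segment),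
   together with the string sigma_m = state on the bra side of O_m. *)
definition W2 :: "nat \<Rightarrow> nat \<Rightarrow> real \<Rightarrow> (nat \<Rightarrow> nat \<Rightarrow> real) \<Rightarrow> (nat \<Rightarrow> nat \<Rightarrow> real)
                  \<Rightarrow> (nat \<Rightarrow> real) \<Rightarrow> (nat \<times> nat) set \<Rightarrow> (nat \<Rightarrow> bool) list \<Rightarrow> real" where
  "W2 n L \<delta> a b d S \<sigma>s =
     (let M = length (ops n L) in
      \<Prod>m<M. elem \<delta> a b d (ops n L ! m) (\<sigma>s ! m)
                 (flip {q. (m, q) \<in> S} (\<sigma>s ! ((m + 1) mod M))))"

definition C2 :: "nat \<Rightarrow> nat \<Rightarrow> real \<Rightarrow> (nat \<Rightarrow> nat \<Rightarrow> real) \<Rightarrow> (nat \<Rightarrow> nat \<Rightarrow> real)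
                  \<Rightarrow> (nat \<Rightarrow> real) \<Rightarrow> ((nat \<times> nat) set \<times> (nat \<Rightarrow> bool) list) set" where
  "C2 n L \<delta> a b d = {(S, \<sigma>s). S \<subseteq> segs n L \<and> card S = 2 \<and> \<sigma>s \<in> configs n L
                        \<and> W2 n L \<delta> a b d S \<sigma>s \<noteq> 0}"

definition Wtotal :: "nat \<Rightarrow> nat \<Rightarrow> real \<Rightarrow> (nat \<Rightarrow> nat \<Rightarrow> real) \<Rightarrow> (nat \<Rightarrow> nat \<Rightarrow> real)
                  \<Rightarrow> (nat \<Rightarrow> real) \<Rightarrow> real" where
  "Wtotal n L \<delta> a b d =
     (\<Sum>\<gamma>\<in>C0 n L \<delta> a b d. W0 n L \<delta> a b d \<gamma>)
     + 2 / real (M1 n L + 2 * M2 n L) * (\<Sum>(S, \<sigma>s)\<in>C2 n L \<delta> a b d. W2 n L \<delta> a b d S \<sigma>s)"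

definition pi0 :: "nat \<Rightarrow> nat \<Rightarrow> real \<Rightarrow> (nat \<Rightarrow> nat \<Rightarrow> real) \<Rightarrow> (nat \<Rightarrow> nat \<Rightarrow> real)
                  \<Rightarrow> (nat \<Rightarrow> real) \<Rightarrow> (nat \<Rightarrow> bool) list \<Rightarrow> real" where
  "pi0 n L \<delta> a b d \<gamma> = W0 n L \<delta> a b d \<gamma> / Wtotal n L \<delta> a b d"

definition pi2 :: "nat \<Rightarrow> nat \<Rightarrow> real \<Rightarrow> (nat \<Rightarrow> nat \<Rightarrow> real) \<Rightarrow> (nat \<Rightarrow> nat \<Rightarrow> real)
                  \<Rightarrow> (nat \<Rightarrow> real) \<Rightarrow> (nat \<times> nat) set \<times> (nat \<Rightarrow> bool) list \<Rightarrow> real" where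
  "pi2 n L \<delta> a b d \<xi> = 2 / real (M1 n L + 2 * M2 n L) * W2 n L \<delta> a b d (fst \<xi>) (snd \<xi>)
                         / Wtotal n L \<delta> a b d"

end

theory Submission
  imports Defs "HOL-Analysis.Convex"
begin

(* Summing the weights over the basis-state strings turns both sums into traces of matrix
   products: the C_0 weights add up to tr G^L with G = C C^T, and for a fixed pair S of worm-head
   segments the C_2 weights add up to the trace of the same product in which the (at most two)
   factors C C^T that contain a head are replaced by blocks U, V carrying the X insertions.
   Every factor of C has norm at most 1 + delta and is bounded below by 1 - delta, so, as
   delta times the number of factors of C is at most 1/2, the blocks have squared norm at most 16
   and tr G^(m+1) >= tr G^m / 4. The key estimate is |tr (G^s U G^r V)| <= k tr G^(s+r) when
   U, V and their transposes have squared norm at most k; writing G^m = Q_m Q_m^T it follows from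
   Cauchy-Schwarz for the Frobenius inner product together with log-convexity of
   t |-> tr (U G^(T-t) U^T G^t), which reduces it to the endpoints t = 0 and t = T. Hence each pair
   contributes at most 256 tr G^L, and the binomial(M_1 + 2 M_2, 2) pairs weighted by
   2 / (M_1 + 2 M_2) give a ratio of at most 256 (M_1 + 2 M_2) = 512 L n^2 = O(n^4 beta^2 / epsilon). *)

(* Real matrices indexed by a finite carrier B are functions that vanish outside B \<times> B
   (predicate mat_on); all operations only look at entries in B \<times> B. *)

type_synonym 'a rmat = "'a \<Rightarrow> 'a \<Rightarrow> real"

definition mmult :: "'a set \<Rightarrow> 'a rmat \<Rightarrow> 'a rmat \<Rightarrow> 'a rmat" where
  "mmult B A C = (\<lambda>x y. if x \<in> B \<and> y \<in> B then (\<Sum>z\<in>B. A x z * C z y) else 0)"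

definition mone :: "'a set \<Rightarrow> 'a rmat" where
  "mone B = (\<lambda>x y. if x \<in> B \<and> x = y then 1 else 0)"

definition mat_on :: "'a set \<Rightarrow> 'a rmat \<Rightarrow> bool" where
  "mat_on B A \<longleftrightarrow> (\<forall>x y. A x y \<noteq> 0 \<longrightarrow> x \<in> B \<and> y \<in> B)"

definition mtransp :: "'a rmat \<Rightarrow> 'a rmat" where
  "mtransp A = (\<lambda>x y. A y x)"

definition mtrace :: "'a set \<Rightarrow> 'a rmat \<Rightarrow> real" where
  "mtrace B A = (\<Sum>x\<in>B. A x x)"

definition frob_sq :: "'a set \<Rightarrow> 'a rmat \<Rightarrow> real" where
  "frob_sq B A = (\<Sum>x\<in>B. \<Sum>y\<in>B. (A x y)\<^sup>2)"

definition frob_inner :: "'a set \<Rightarrow> 'a rmat \<Rightarrow> 'a rmat \<Rightarrow> real" where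
  "frob_inner B A C = (\<Sum>x\<in>B. \<Sum>y\<in>B. A x y * C x y)"

definition mvec :: "'a set \<Rightarrow> 'a rmat \<Rightarrow> ('a \<Rightarrow> real) \<Rightarrow> 'a \<Rightarrow> real" where
  "mvec B A v = (\<lambda>x. \<Sum>y\<in>B. A x y * v y)"

definition vnorm_sq :: "'a set \<Rightarrow> ('a \<Rightarrow> real) \<Rightarrow> real" where
  "vnorm_sq B v = (\<Sum>x\<in>B. (v x)\<^sup>2)"

definition norm_sq_le :: "'a set \<Rightarrow> 'a rmat \<Rightarrow> real \<Rightarrow> bool" where
  "norm_sq_le B A K \<longleftrightarrow> (\<forall>v. vnorm_sq B (mvec B A v) \<le> K * vnorm_sq B v)"

definition norm_sq_ge :: "'a set \<Rightarrow> 'a rmat \<Rightarrow> real \<Rightarrow> bool" where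
  "norm_sq_ge B A K \<longleftrightarrow> (\<forall>v. K * vnorm_sq B v \<le> vnorm_sq B (mvec B A v))"

definition mprod :: "'a set \<Rightarrow> 'a rmat list \<Rightarrow> 'a rmat" where
  "mprod B As = foldr (mmult B) As (mone B)"

definition mpow :: "'a set \<Rightarrow> 'a rmat \<Rightarrow> nat \<Rightarrow> 'a rmat" where
  "mpow B A k = mprod B (replicate k A)"

lemma mmult_assoc: "mmult B (mmult B A C) D = mmult B A (mmult B C D)"
proof (intro ext)
  fix x y
  show "mmult B (mmult B A C) D x y = mmult B A (mmult B C D) x y"
  proof (cases "x \<in> B \<and> y \<in> B")
    case True
    have "mmult B (mmult B A C) D x y = (\<Sum>z\<in>B. \<Sum>w\<in>B. A x w * C w z * D z y)"
      using True by (auto simp: mmult_def sum_distrib_right intro!: sum.cong)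
    also have "\<dots> = (\<Sum>w\<in>B. \<Sum>z\<in>B. A x w * C w z * D z y)"
      by (rule sum.swap)
    also have "\<dots> = mmult B A (mmult B C D) x y"
      using True by (auto simp: mmult_def sum_distrib_left mult.assoc intro!: sum.cong)
    finally show ?thesis .
  qed (auto simp: mmult_def)
qed

lemma mat_on_mmult [simp]: "mat_on B (mmult B A C)"
  by (auto simp: mat_on_def mmult_def)

lemma mat_on_mone [simp]: "mat_on B (mone B)"
  by (auto simp: mat_on_def mone_def)

lemma mat_on_mtransp: "mat_on B A \<Longrightarrow> mat_on B (mtransp A)"
  by (auto simp: mat_on_def mtransp_def)

lemma if_one_zero_mult [simp]: "(if P then 1 else 0) * (a::real) = (if P then a else 0)"
  by simp

lemma mult_if_one_zero [simp]: "(a::real) * (if P then 1 else 0) = (if P then a else 0)"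
  by simp

lemma mmult_mone_left: "finite B \<Longrightarrow> mat_on B A \<Longrightarrow> mmult B (mone B) A = A"
  by (auto simp: mmult_def mone_def mat_on_def fun_eq_iff)

lemma mmult_mone_right: "finite B \<Longrightarrow> mat_on B A \<Longrightarrow> mmult B A (mone B) = A"
  by (auto simp: mmult_def mone_def mat_on_def fun_eq_iff)

lemma mmult_mmult_mone: "finite B \<Longrightarrow> mmult B A (mmult B C (mone B)) = mmult B A C"
  by (simp add: mmult_def mone_def fun_eq_iff cong: sum.cong)

lemma mtransp_mtransp [simp]: "mtransp (mtransp A) = A"
  by (simp add: mtransp_def)

lemma mtransp_mone [simp]: "mtransp (mone B) = mone B"
  by (auto simp: mtransp_def mone_def fun_eq_iff)

lemma mtransp_mmult: "mtransp (mmult B A C) = mmult B (mtransp C) (mtransp A)"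
  by (auto simp: mtransp_def mmult_def mult.commute intro!: ext)

lemma mtrace_mmult_commute: "mtrace B (mmult B A C) = mtrace B (mmult B C A)"
proof -
  have "mtrace B (mmult B A C) = (\<Sum>x\<in>B. \<Sum>z\<in>B. A x z * C z x)"
    by (simp add: mtrace_def mmult_def)
  also have "\<dots> = (\<Sum>z\<in>B. \<Sum>x\<in>B. C z x * A x z)"
    by (subst sum.swap) (simp add: mult.commute)
  also have "\<dots> = mtrace B (mmult B C A)"
    by (simp add: mtrace_def mmult_def)
  finally show ?thesis .
qed

lemma frob_sq_eq_mtrace: "frob_sq B A = mtrace B (mmult B A (mtransp A))"
  by (simp add: frob_sq_def mtrace_def mmult_def mtransp_def power2_eq_square)

lemma frob_inner_eq_mtrace: "frob_inner B A C = mtrace B (mmult B A (mtransp C))"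
  by (simp add: frob_inner_def mtrace_def mmult_def mtransp_def)

lemma frob_sq_mtransp: "frob_sq B (mtransp A) = frob_sq B A"
  unfolding frob_sq_def mtransp_def by (rule sum.swap)

lemma frob_sq_nonneg: "0 \<le> frob_sq B A"
  by (simp add: frob_sq_def sum_nonneg)

lemma frob_inner_Cauchy_Schwarz: "(frob_inner B A C)\<^sup>2 \<le> frob_sq B A * frob_sq B C"
  using Cauchy_Schwarz_ineq_sum[of "\<lambda>p. A (fst p) (snd p)" "\<lambda>p. C (fst p) (snd p)" "B \<times> B"]
  by (simp add: frob_inner_def frob_sq_def sum.cartesian_product split_beta)

lemma mvec_mmult: "x \<in> B \<Longrightarrow> mvec B (mmult B A C) v x = mvec B A (mvec B C v) x"
proof -
  assume x: "x \<in> B"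
  have "mvec B (mmult B A C) v x = (\<Sum>y\<in>B. \<Sum>z\<in>B. A x z * C z y * v y)"
    using x by (auto simp: mvec_def mmult_def sum_distrib_right intro!: sum.cong)
  also have "\<dots> = (\<Sum>z\<in>B. \<Sum>y\<in>B. A x z * C z y * v y)"
    by (rule sum.swap)
  finally show ?thesis
    by (simp add: mvec_def sum_distrib_left mult.assoc)
qed

lemma vnorm_sq_mvec_mmult: "vnorm_sq B (mvec B (mmult B A C) v) = vnorm_sq B (mvec B A (mvec B C v))"
  by (simp add: vnorm_sq_def mvec_mmult)

lemma vnorm_sq_nonneg: "0 \<le> vnorm_sq B v"
  by (simp add: vnorm_sq_def sum_nonneg)

lemma norm_sq_le_mmult:
  "norm_sq_le B A K1 \<Longrightarrow> norm_sq_le B C K2 \<Longrightarrow> 0 \<le> K1 \<Longrightarrow> norm_sq_le B (mmult B A C) (K1 * K2)"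
  unfolding norm_sq_le_def vnorm_sq_mvec_mmult
  by (metis (no_types, opaque_lifting) mult.assoc mult_left_mono order_trans)

lemma norm_sq_ge_mmult:
  "norm_sq_ge B A K1 \<Longrightarrow> norm_sq_ge B C K2 \<Longrightarrow> 0 \<le> K1 \<Longrightarrow> norm_sq_ge B (mmult B A C) (K1 * K2)"
  unfolding norm_sq_ge_def vnorm_sq_mvec_mmult
  by (metis (no_types, opaque_lifting) mult.assoc mult_left_mono order_trans)

lemma vnorm_sq_mvec_mone: "finite B \<Longrightarrow> vnorm_sq B (mvec B (mone B) v) = vnorm_sq B v"
  by (simp add: vnorm_sq_def mvec_def mone_def)

lemma norm_sq_le_mone: "finite B \<Longrightarrow> 1 \<le> K \<Longrightarrow> norm_sq_le B (mone B) K"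
  unfolding norm_sq_le_def vnorm_sq_mvec_mone
  by (metis mult_1 mult_right_mono vnorm_sq_nonneg)

lemma norm_sq_ge_mone: "finite B \<Longrightarrow> norm_sq_ge B (mone B) 1"
  by (simp add: norm_sq_ge_def vnorm_sq_mvec_mone)

lemma norm_sq_le_mono: "norm_sq_le B A K \<Longrightarrow> K \<le> K' \<Longrightarrow> norm_sq_le B A K'"
  unfolding norm_sq_le_def by (meson mult_right_mono vnorm_sq_nonneg order_trans)

lemma frob_sq_by_columns: "frob_sq B A = (\<Sum>y\<in>B. vnorm_sq B (\<lambda>z. A z y))"
  unfolding frob_sq_def vnorm_sq_def by (rule sum.swap)

lemma frob_sq_mmult_by_columns:
  "frob_sq B (mmult B A C) = (\<Sum>y\<in>B. vnorm_sq B (mvec B A (\<lambda>z. C z y)))"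
  unfolding frob_sq_by_columns vnorm_sq_def by (simp add: mmult_def mvec_def)

lemma frob_sq_mmult_le: "norm_sq_le B A K \<Longrightarrow> frob_sq B (mmult B A C) \<le> K * frob_sq B C"
  unfolding frob_sq_mmult_by_columns frob_sq_by_columns[of B C] sum_distrib_left norm_sq_le_def
  by (intro sum_mono) blast

lemma frob_sq_mmult_ge: "norm_sq_ge B A K \<Longrightarrow> K * frob_sq B C \<le> frob_sq B (mmult B A C)"
  unfolding frob_sq_mmult_by_columns frob_sq_by_columns[of B C] sum_distrib_left norm_sq_ge_def
  by (intro sum_mono) blast

lemma mprod_Nil [simp]: "mprod B [] = mone B"
  by (simp add: mprod_def)

lemma mprod_Cons [simp]: "mprod B (A # As) = mmult B A (mprod B As)"
  by (simp add: mprod_def)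

lemma mat_on_mprod [simp]: "mat_on B (mprod B As)"
  by (cases As) auto

lemma mprod_append: "finite B \<Longrightarrow> mprod B (As @ Cs) = mmult B (mprod B As) (mprod B Cs)"
  by (induction As) (auto simp: mmult_mone_left mmult_assoc)

lemma mprod_concat: "finite B \<Longrightarrow> mprod B (concat Ass) = mprod B (map (mprod B) Ass)"
  by (induction Ass) (auto simp: mprod_append)

lemma mtransp_mprod: "finite B \<Longrightarrow> mtransp (mprod B As) = mprod B (rev (map mtransp As))"
proof (induction As)
  case (Cons A As)
  then show ?case
    by (simp add: mtransp_mmult mprod_append mmult_mmult_mone)
qed (auto simp: mone_def mtransp_def fun_eq_iff)

lemma norm_sq_le_mprod:
  "finite B \<Longrightarrow> \<forall>A\<in>set As. norm_sq_le B A K \<Longrightarrow> 0 \<le> K \<Longrightarrow> norm_sq_le B (mprod B As) (K ^ length As)"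
  by (induction As) (auto simp: norm_sq_le_mone intro: norm_sq_le_mmult)

lemma norm_sq_ge_mprod:
  "finite B \<Longrightarrow> \<forall>A\<in>set As. norm_sq_ge B A K \<Longrightarrow> 0 \<le> K \<Longrightarrow> norm_sq_ge B (mprod B As) (K ^ length As)"
  by (induction As) (auto simp: norm_sq_ge_mone intro: norm_sq_ge_mmult)

lemma mpow_0 [simp]: "mpow B A 0 = mone B"
  by (simp add: mpow_def)

lemma mpow_Suc: "mpow B A (Suc k) = mmult B A (mpow B A k)"
  by (simp add: mpow_def)

lemma mmult_mpow: "finite B \<Longrightarrow> mmult B (mpow B A k) (mpow B A l) = mpow B A (k + l)"
  by (simp add: mpow_def replicate_add mprod_append)

lemma mpow_1: "finite B \<Longrightarrow> mat_on B A \<Longrightarrow> mpow B A 1 = A"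
  by (simp add: mpow_def mmult_mone_right)

lemma mtransp_mpow: "finite B \<Longrightarrow> mtransp A = A \<Longrightarrow> mtransp (mpow B A k) = mpow B A k"
  by (simp add: mpow_def mtransp_mprod)


lemma sum_lists_length_Suc:
  "(\<Sum>xs | set xs \<subseteq> B \<and> length xs = Suc k. g xs) = (\<Sum>x\<in>B. \<Sum>ys | set ys \<subseteq> B \<and> length ys = k. g (x # ys))"
proof -
  have "inj_on (\<lambda>(ys, x). x # ys) ({ys. set ys \<subseteq> B \<and> length ys = k} \<times> B)"
    by (auto simp: inj_on_def)
  then have "(\<Sum>xs | set xs \<subseteq> B \<and> length xs = Suc k. g xs)
      = (\<Sum>(ys, x) \<in> {ys. set ys \<subseteq> B \<and> length ys = k} \<times> B. g (x # ys))"
    unfolding lists_length_Suc_eq by (subst sum.reindex) (simp_all add: case_prod_beta')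
  also have "\<dots> = (\<Sum>x\<in>B. \<Sum>ys | set ys \<subseteq> B \<and> length ys = k. g (x # ys))"
    by (simp add: sum.cartesian_product[symmetric] sum.swap[of _ B])
  finally show ?thesis .
qed

lemma mprod_apply_eq_path_sum:
  assumes "finite B" "As \<noteq> []" "x \<in> B" "y \<in> B"
  shows "mprod B As x y =
    (\<Sum>xs | set xs \<subseteq> B \<and> length xs = length As - 1. \<Prod>m<length As. (As ! m) ((x # xs) ! m) ((xs @ [y]) ! m))"
  using assms(2,3)
proof (induction As arbitrary: x)
  case (Cons A As)
  show ?case
  proof (cases "As = []")
    case True
    have "{xs. set xs \<subseteq> B \<and> length xs = 0} = {[]}"
      by auto
    then show ?thesis
      using True Cons.prems assms(1,4) by (simp add: mmult_def mone_def)
  next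
    case False
    then obtain k where k: "length As = Suc k" by (cases As) auto
    have "mprod B (A # As) x y
        = (\<Sum>z\<in>B. A x z * (\<Sum>ys | set ys \<subseteq> B \<and> length ys = k. \<Prod>m<Suc k. (As ! m) ((z # ys) ! m) ((ys @ [y]) ! m)))"
      using Cons.prems Cons.IH[OF False] k assms(4) by (simp add: mmult_def)
    also have "\<dots> = (\<Sum>z\<in>B. \<Sum>ys | set ys \<subseteq> B \<and> length ys = k.
        \<Prod>m<Suc (Suc k). ((A # As) ! m) ((x # z # ys) ! m) (((z # ys) @ [y]) ! m))"
      by (simp add: sum_distrib_left prod.lessThan_Suc_shift del: prod.lessThan_Suc)
    finally show ?thesis
      using k by (simp add: sum_lists_length_Suc)
  qed
qed simp

lemma mtrace_mprod_eq_cyclic_sum: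
  assumes "finite B" "As \<noteq> []"
  shows "mtrace B (mprod B As) =
    (\<Sum>xs | set xs \<subseteq> B \<and> length xs = length As. \<Prod>m<length As. (As ! m) (xs ! m) (xs ! ((m + 1) mod length As)))"
proof -
  obtain k where k: "length As = Suc k" using assms(2) by (cases As) auto
  have cyclic: "(xs @ [x]) ! m = (x # xs) ! ((m + 1) mod Suc k)" if "length xs = k" "m < Suc k" for x xs m
  proof (cases "m = k")
    case False
    then have "Suc m < Suc k" using that by simp
    then show ?thesis using that by (simp add: nth_append)
  qed (simp add: nth_append that)
  have "mtrace B (mprod B As)
      = (\<Sum>x\<in>B. \<Sum>xs | set xs \<subseteq> B \<and> length xs = k. \<Prod>m<Suc k. (As ! m) ((x # xs) ! m) ((xs @ [x]) ! m))"
    unfolding mtrace_def using mprod_apply_eq_path_sum[OF assms] k by simp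
  also have "\<dots> = (\<Sum>x\<in>B. \<Sum>xs | set xs \<subseteq> B \<and> length xs = k.
      \<Prod>m<Suc k. (As ! m) ((x # xs) ! m) ((x # xs) ! ((m + 1) mod Suc k)))"
    by (intro sum.cong prod.cong refl) (simp add: cyclic)
  finally show ?thesis
    using k by (simp add: sum_lists_length_Suc)
qed

lemma log_convex_le_max_endpoints:
  fixes f :: "nat \<Rightarrow> real"
  assumes nonneg: "\<And>t. t \<le> T \<Longrightarrow> 0 \<le> f t"
    and log_convex: "\<And>t. 0 < t \<Longrightarrow> t < T \<Longrightarrow> (f t)\<^sup>2 \<le> f (t - 1) * f (t + 1)"
    and "t \<le> T"
  shows "f t \<le> max (f 0) (f T)"
proof (rule ccontr)
  assume not_le: "\<not> f t \<le> max (f 0) (f T)"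
  define m where "m = Max (f ` {0..T})"
  have le_m: "f u \<le> m" if "u \<le> T" for u
    unfolding m_def using that by (intro Max_ge) auto
  have "m \<in> f ` {0..T}"
    unfolding m_def by (intro Max_in) auto
  then obtain u where u: "u \<le> T" "f u = m" by auto
  \<comment> \<open>the first point where the maximum is attained is interior, and there log-convexity fails\<close>
  define s where "s = (LEAST u. u \<le> T \<and> f u = m)"
  have s: "s \<le> T" "f s = m"
    using LeastI[of "\<lambda>u. u \<le> T \<and> f u = m" u] u unfolding s_def by auto
  have before_s: "\<not> (v \<le> T \<and> f v = m)" if "v < s" for v
    using not_less_Least[OF that[unfolded s_def]] by (simp add: s_def)
  have m_gt: "max (f 0) (f T) < m"
    using not_le le_m[OF \<open>t \<le> T\<close>] by linarith
  have "s \<noteq> 0"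
    using s m_gt by (cases s) auto
  have "s \<noteq> T"
    using s m_gt by auto
  have "0 < m"
    using m_gt nonneg[of 0] by auto
  have left: "f (s - 1) < m"
    using before_s[of "s - 1"] le_m[of "s - 1"] s \<open>s \<noteq> 0\<close> by force
  have right: "f (s + 1) \<le> m"
    using le_m[of "s + 1"] s \<open>s \<noteq> T\<close> by auto
  have "m\<^sup>2 \<le> f (s - 1) * f (s + 1)"
    using log_convex[of s] s \<open>s \<noteq> 0\<close> \<open>s \<noteq> T\<close> by auto
  also have "\<dots> \<le> f (s - 1) * m"
    using right nonneg[of "s - 1"] s by (intro mult_left_mono) auto
  also have "\<dots> < m * m"
    using left \<open>0 < m\<close> by (simp add: mult_strict_right_mono)
  finally show False
    by (simp add: power2_eq_square)
qed

locale gram =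
  fixes B :: "'a set" and C :: "'a rmat"
  assumes finite_B: "finite B" and mat_on_C: "mat_on B C"
begin

definition Gram :: "'a rmat" where
  "Gram = mmult B C (mtransp C)"

definition Gpow :: "nat \<Rightarrow> 'a rmat" where
  "Gpow k = mpow B Gram k"

definition Groot :: "nat \<Rightarrow> 'a rmat" where
  "Groot m = (if even m then Gpow (m div 2) else mmult B (Gpow (m div 2)) C)"

definition conj_trace :: "'a rmat \<Rightarrow> nat \<Rightarrow> nat \<Rightarrow> real" where
  "conj_trace U k l = mtrace B (mmult B U (mmult B (Gpow k) (mmult B (mtransp U) (Gpow l))))"

definition split_factor :: "'a rmat \<Rightarrow> nat \<Rightarrow> nat \<Rightarrow> 'a rmat" where
  "split_factor U i j = mmult B (mmult B (mtransp (Groot i)) U) (Groot j)"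

lemma mtransp_Gram: "mtransp Gram = Gram"
  by (simp add: Gram_def mtransp_mmult)

lemma mat_on_Gram: "mat_on B Gram"
  by (simp add: Gram_def)

lemma mtransp_Gpow: "mtransp (Gpow k) = Gpow k"
  by (simp add: Gpow_def mtransp_mpow finite_B mtransp_Gram)

lemma mmult_Gpow: "mmult B (Gpow k) (Gpow l) = Gpow (k + l)"
  by (simp add: Gpow_def mmult_mpow finite_B)

lemma mmult_Gram_Gpow: "mmult B Gram (Gpow k) = Gpow (Suc k)"
  by (simp add: Gpow_def mpow_Suc)

lemma Gpow_0: "Gpow 0 = mone B"
  by (simp add: Gpow_def)

lemma Gpow_1: "Gpow 1 = Gram"
  using mpow_1[OF finite_B mat_on_Gram] by (simp add: Gpow_def)

lemma mmult_Gpow_Gram: "mmult B (Gpow k) Gram = Gpow (Suc k)"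
  by (metis mmult_Gpow Gpow_1 Suc_eq_plus1)

lemma mmult_Groot_mtransp: "mmult B (Groot m) (mtransp (Groot m)) = Gpow m"
proof (cases "even m")
  case True
  then obtain k where m: "m = 2 * k" by auto
  show ?thesis by (simp add: Groot_def m mtransp_Gpow mmult_Gpow flip: mult_2)
next
  case False
  then obtain k where m: "m = 2 * k + 1" using oddE by blast
  have "mmult B (Groot m) (mtransp (Groot m)) = mmult B (Gpow k) (mmult B Gram (Gpow k))"
    by (simp add: Groot_def m mtransp_mmult mtransp_Gpow mmult_assoc Gram_def)
  also have "\<dots> = Gpow m"
    by (simp add: mmult_Gram_Gpow mmult_Gpow m mult_2)
  finally show ?thesis .
qed

lemma mmult_Groot_Suc_Suc_mtransp: "mmult B (Groot (Suc (Suc m))) (mtransp (Groot m)) = Gpow (Suc m)"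
proof (cases "even m")
  case True
  then obtain k where m: "m = 2 * k" by auto
  have "Suc (Suc m) = 2 * (k + 1)" using m by simp
  then show ?thesis by (simp add: Groot_def m mtransp_Gpow mmult_Gpow mult_2)
next
  case False
  then obtain k where m: "m = 2 * k + 1" using oddE by blast
  have "Suc (Suc m) div 2 = k + 1" "odd (Suc (Suc m))" using m by auto
  then have "mmult B (Groot (Suc (Suc m))) (mtransp (Groot m)) = mmult B (Gpow (k + 1)) (mmult B Gram (Gpow k))"
    using m by (simp add: Groot_def mtransp_mmult mtransp_Gpow mmult_assoc Gram_def)
  also have "\<dots> = Gpow (Suc m)"
    by (simp add: mmult_Gram_Gpow mmult_Gpow m mult_2)
  finally show ?thesis .
qed

lemma mmult_Groot_mtransp_assoc: "mmult B (Groot m) (mmult B (mtransp (Groot m)) X) = mmult B (Gpow m) X"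
  by (simp flip: mmult_assoc add: mmult_Groot_mtransp)

lemma mmult_Groot_Suc_Suc_mtransp_assoc:
  "mmult B (Groot (Suc (Suc m))) (mmult B (mtransp (Groot m)) X) = mmult B (Gpow (Suc m)) X"
  by (simp flip: mmult_assoc add: mmult_Groot_Suc_Suc_mtransp)

lemma mtrace_Gpow_eq_frob_sq: "mtrace B (Gpow m) = frob_sq B (Groot m)"
  by (simp add: frob_sq_eq_mtrace mmult_Groot_mtransp)

lemma mtrace_Gpow_nonneg: "0 \<le> mtrace B (Gpow m)"
  by (simp add: mtrace_Gpow_eq_frob_sq frob_sq_nonneg)

lemma frob_sq_split_factor: "frob_sq B (split_factor U j k) = conj_trace U k j"
proof -
  have "frob_sq B (split_factor U j k)
      = mtrace B (mmult B (mtransp (Groot j)) (mmult B U (mmult B (Gpow k) (mmult B (mtransp U) (Groot j)))))"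
    by (simp add: frob_sq_eq_mtrace split_factor_def mtransp_mmult mmult_assoc mmult_Groot_mtransp_assoc)
  also have "\<dots> = conj_trace U k j"
    by (subst mtrace_mmult_commute) (simp add: mmult_assoc mmult_Groot_mtransp conj_trace_def)
  finally show ?thesis .
qed

lemma frob_inner_split_factor_shift:
  "frob_inner B (split_factor U i (Suc (Suc j))) (split_factor U (Suc (Suc i)) j) = conj_trace U (Suc j) (Suc i)"
proof -
  have "frob_inner B (split_factor U i (Suc (Suc j))) (split_factor U (Suc (Suc i)) j)
      = mtrace B (mmult B (mtransp (Groot i))
          (mmult B U (mmult B (Gpow (Suc j)) (mmult B (mtransp U) (Groot (Suc (Suc i)))))))"
    by (simp add: frob_inner_eq_mtrace split_factor_def mtransp_mmult mmult_assoc
        mmult_Groot_Suc_Suc_mtransp_assoc)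
  also have "\<dots> = conj_trace U (Suc j) (Suc i)"
    by (subst mtrace_mmult_commute) (simp add: mmult_assoc mmult_Groot_Suc_Suc_mtransp conj_trace_def)
  finally show ?thesis .
qed

lemma conj_trace_log_convex:
  "(conj_trace U (Suc j) (Suc i))\<^sup>2 \<le> conj_trace U (Suc (Suc j)) i * conj_trace U j (Suc (Suc i))"
  using frob_inner_Cauchy_Schwarz[of B "split_factor U i (Suc (Suc j))" "split_factor U (Suc (Suc i)) j"]
  by (simp add: frob_inner_split_factor_shift frob_sq_split_factor)

lemma conj_trace_endpoints_le:
  assumes "mat_on B U" "norm_sq_le B U k" "norm_sq_le B (mtransp U) k"
  shows "conj_trace U T 0 \<le> k * mtrace B (Gpow T)" and "conj_trace U 0 T \<le> k * mtrace B (Gpow T)"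
proof -
  have "conj_trace U T 0 = frob_sq B (mmult B U (Groot T))"
    by (simp flip: frob_sq_split_factor add: split_factor_def Groot_def Gpow_0 mmult_mone_left finite_B assms(1))
  also have "\<dots> \<le> k * mtrace B (Gpow T)"
    using frob_sq_mmult_le[OF assms(2)] by (simp add: mtrace_Gpow_eq_frob_sq)
  finally show "conj_trace U T 0 \<le> k * mtrace B (Gpow T)" .
  have "conj_trace U 0 T = frob_sq B (mtransp (mmult B (mtransp U) (Groot T)))"
    by (simp flip: frob_sq_split_factor add: split_factor_def Groot_def Gpow_0 mmult_mone_right finite_B
        mtransp_mmult)
  also have "\<dots> \<le> k * mtrace B (Gpow T)"
    using frob_sq_mmult_le[OF assms(3)] by (simp add: frob_sq_mtransp mtrace_Gpow_eq_frob_sq)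
  finally show "conj_trace U 0 T \<le> k * mtrace B (Gpow T)" .
qed

lemma conj_trace_le:
  assumes "mat_on B U" "norm_sq_le B U k" "norm_sq_le B (mtransp U) k" "t \<le> T"
  shows "conj_trace U (T - t) t \<le> k * mtrace B (Gpow T)"
proof -
  define f where "f t = conj_trace U (T - t) t" for t
  have "f t \<le> max (f 0) (f T)"
  proof (rule log_convex_le_max_endpoints[OF _ _ \<open>t \<le> T\<close>])
    show "0 \<le> f t" for t
      unfolding f_def frob_sq_split_factor[symmetric] by (rule frob_sq_nonneg)
    show "(f t)\<^sup>2 \<le> f (t - 1) * f (t + 1)" if "0 < t" "t < T" for t
    proof -
      define i j where "i = t - 1" and "j = T - t - 1"
      have "T - t = Suc j" "T - (t - 1) = Suc (Suc j)" "T - (t + 1) = j"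
        "t = Suc i" "t - 1 = i" "t + 1 = Suc (Suc i)"
        using that unfolding i_def j_def by auto
      then show ?thesis
        unfolding f_def using conj_trace_log_convex[of U j i] by simp
    qed
  qed
  then show ?thesis
    using conj_trace_endpoints_le[OF assms(1-3), of T] by (simp add: f_def)
qed

lemma mtrace_sandwich_eq_frob_inner:
  "mtrace B (mmult B (Gpow s) (mmult B U (mmult B (Gpow r) V)))
     = frob_inner B (split_factor U s r) (split_factor (mtransp V) s r)"
proof -
  have "frob_inner B (split_factor U s r) (split_factor (mtransp V) s r)
      = mtrace B (mmult B (mtransp (Groot s)) (mmult B U (mmult B (Gpow r) (mmult B V (Groot s)))))"
    by (simp add: frob_inner_eq_mtrace split_factor_def mtransp_mmult mmult_assoc mmult_Groot_mtransp_assoc)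
  also have "\<dots> = mtrace B (mmult B (mmult B U (mmult B (Gpow r) V)) (Gpow s))"
    by (subst mtrace_mmult_commute) (simp add: mmult_assoc mmult_Groot_mtransp)
  also have "\<dots> = mtrace B (mmult B (Gpow s) (mmult B U (mmult B (Gpow r) V)))"
    by (rule mtrace_mmult_commute)
  finally show ?thesis ..
qed

lemma mtrace_sandwich_bound:
  assumes U: "mat_on B U" "norm_sq_le B U k" "norm_sq_le B (mtransp U) k"
    and V: "mat_on B V" "norm_sq_le B V k" "norm_sq_le B (mtransp V) k"
    and "0 \<le> k"
  shows "\<bar>mtrace B (mmult B (Gpow s) (mmult B U (mmult B (Gpow r) V)))\<bar> \<le> k * mtrace B (Gpow (s + r))"
proof -
  have U_le: "frob_sq B (split_factor U s r) \<le> k * mtrace B (Gpow (s + r))"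
    using conj_trace_le[OF U, of s "s + r"] by (simp add: frob_sq_split_factor)
  have V_le: "frob_sq B (split_factor (mtransp V) s r) \<le> k * mtrace B (Gpow (s + r))"
    using conj_trace_le[of "mtransp V" k s "s + r"] V by (simp add: frob_sq_split_factor mat_on_mtransp)
  have "(mtrace B (mmult B (Gpow s) (mmult B U (mmult B (Gpow r) V))))\<^sup>2
      \<le> frob_sq B (split_factor U s r) * frob_sq B (split_factor (mtransp V) s r)"
    unfolding mtrace_sandwich_eq_frob_inner by (rule frob_inner_Cauchy_Schwarz)
  also have "\<dots> \<le> (k * mtrace B (Gpow (s + r)))\<^sup>2"
    unfolding power2_eq_square using U_le V_le mult_nonneg_nonneg[OF \<open>0 \<le> k\<close> mtrace_Gpow_nonneg]
    by (intro mult_mono) (auto simp: frob_sq_nonneg)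
  finally show ?thesis
    by (metis abs_le_square_iff abs_of_nonneg mult_nonneg_nonneg \<open>0 \<le> k\<close> mtrace_Gpow_nonneg)
qed

lemma mtrace_Gpow_Suc_ge:
  assumes "norm_sq_ge B (mtransp C) l"
  shows "l * mtrace B (Gpow m) \<le> mtrace B (Gpow (Suc m))"
proof -
  have "mtrace B (Gpow (Suc m))
      = mtrace B (mmult B (Groot m) (mmult B (mtransp (Groot m)) (mmult B C (mtransp C))))"
    by (simp add: mmult_Groot_mtransp_assoc mmult_Gpow_Gram flip: Gram_def)
  also have "\<dots> = mtrace B (mmult B (mtransp C) (mmult B (Groot m) (mmult B (mtransp (Groot m)) C)))"
    by (subst mtrace_mmult_commute) (simp add: mmult_assoc)
  also have "\<dots> = frob_sq B (mmult B (mtransp C) (Groot m))"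
    by (simp add: frob_sq_eq_mtrace mtransp_mmult mmult_assoc)
  finally show ?thesis
    using frob_sq_mmult_ge[OF assms] by (simp add: mtrace_Gpow_eq_frob_sq)
qed

lemma mtrace_Gpow_add_ge:
  assumes "norm_sq_ge B (mtransp C) l" "0 \<le> l"
  shows "l ^ d * mtrace B (Gpow m) \<le> mtrace B (Gpow (m + d))"
proof (induction d)
  case (Suc d)
  have "l ^ Suc d * mtrace B (Gpow m) \<le> l * mtrace B (Gpow (m + d))"
    using Suc \<open>0 \<le> l\<close> by (simp add: mult.assoc mult_left_mono)
  also have "\<dots> \<le> mtrace B (Gpow (m + Suc d))"
    using mtrace_Gpow_Suc_ge[OF assms(1)] by simp
  finally show ?case .
qed simp

lemma mprod_upt_Gram:
  "(\<And>x. i \<le> x \<Longrightarrow> x < i + k \<Longrightarrow> g x = Gram) \<Longrightarrow> mprod B (map g [i..<i + k]) = Gpow k"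
proof (induction k)
  case (Suc k)
  have "mprod B (map g [i..<i + Suc k]) = mmult B (mprod B (map g [i..<i + k])) (mmult B (g (i + k)) (mone B))"
    by (simp add: mprod_append finite_B)
  also have "\<dots> = Gpow (Suc k)"
    using Suc by (simp add: mmult_mmult_mone finite_B mmult_Gpow_Gram)
  finally show ?case .
qed (simp add: Gpow_0)

lemma mprod_upt_split:
  "i \<le> j \<Longrightarrow> j \<le> k \<Longrightarrow> mprod B (map g [i..<k]) = mmult B (mprod B (map g [i..<j])) (mprod B (map g [j..<k]))"
  by (metis le_add_diff_inverse mprod_append finite_B map_append upt_add_eq_append)

lemma mprod_upt_defect:
  assumes "i \<le> c" "c < k" "mat_on B (g c)"
    and Gram: "\<And>x. i \<le> x \<Longrightarrow> x < k \<Longrightarrow> x \<noteq> c \<Longrightarrow> g x = Gram"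
  shows "mprod B (map g [i..<k]) = mmult B (Gpow (c - i)) (mmult B (g c) (Gpow (k - Suc c)))"
proof -
  have "mprod B (map g [i..<i + (c - i)]) = Gpow (c - i)"
    by (rule mprod_upt_Gram) (use Gram assms(1,2) in auto)
  moreover have "mprod B (map g [Suc c..<Suc c + (k - Suc c)]) = Gpow (k - Suc c)"
    by (rule mprod_upt_Gram) (use Gram assms(1,2) in auto)
  moreover have "mprod B (map g [c..<k]) = mmult B (mprod B (map g [c..<Suc c])) (mprod B (map g [Suc c..<k]))"
    using \<open>c < k\<close> by (intro mprod_upt_split) auto
  ultimately show ?thesis
    using assms(1-3) mprod_upt_split[of i c k g] by (simp add: mmult_mone_right finite_B)
qed

lemma mtrace_one_defect_le:
  assumes "c < L" and Gram: "\<And>x. x < L \<Longrightarrow> x \<noteq> c \<Longrightarrow> g x = Gram"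
    and g: "mat_on B (g c)" "norm_sq_le B (g c) k" "norm_sq_le B (mtransp (g c)) k" and "1 \<le> k"
  shows "mtrace B (mprod B (map g [0..<L])) \<le> k * mtrace B (Gpow (L - 1))"
proof -
  have "mtrace B (mprod B (map g [0..<L])) = mtrace B (mmult B (mmult B (g c) (Gpow (L - Suc c))) (Gpow c))"
    using mprod_upt_defect[of 0 c L g] assms by (simp add: mtrace_mmult_commute)
  also have "\<dots> = mtrace B (mmult B (g c) (Gpow (L - 1)))"
    using \<open>c < L\<close> by (simp add: mmult_assoc mmult_Gpow)
  also have "\<dots> = mtrace B (mmult B (Gpow (L - 1)) (mmult B (g c) (mmult B (Gpow 0) (mone B))))"
    by (subst mtrace_mmult_commute) (simp add: Gpow_0 mmult_mone_right finite_B g)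
  also have "\<dots> \<le> k * mtrace B (Gpow (L - 1 + 0))"
    using mtrace_sandwich_bound[OF g, of "mone B" "L - 1" 0] \<open>1 \<le> k\<close>
    by (simp add: norm_sq_le_mone finite_B abs_le_iff)
  finally show ?thesis by simp
qed

lemma mtrace_two_defects_le:
  assumes "c1 < c2" "c2 < L" and Gram: "\<And>x. x < L \<Longrightarrow> x \<noteq> c1 \<Longrightarrow> x \<noteq> c2 \<Longrightarrow> g x = Gram"
    and g: "\<And>c. mat_on B (g c) \<and> norm_sq_le B (g c) k \<and> norm_sq_le B (mtransp (g c)) k" and "0 \<le> k"
  shows "mtrace B (mprod B (map g [0..<L])) \<le> k * mtrace B (Gpow (L - 2))"
proof -
  define a b where "a = c2 - Suc c1" and "b = L - Suc c2"
  have "mprod B (map g [0..<Suc c1]) = mmult B (Gpow c1) (g c1)"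
    using mprod_upt_defect[of 0 c1 "Suc c1" g] Gram g \<open>c1 < c2\<close> \<open>c2 < L\<close>
    by (simp add: Gpow_0 mmult_mone_right finite_B)
  moreover have "mprod B (map g [Suc c1..<L]) = mmult B (Gpow a) (mmult B (g c2) (Gpow b))"
    unfolding a_def b_def using mprod_upt_defect[of "Suc c1" c2 L g] Gram g assms(1,2) by simp
  ultimately have "mprod B (map g [0..<L]) = mmult B (Gpow c1) (mmult B (g c1) (mmult B (Gpow a) (mmult B (g c2) (Gpow b))))"
    using mprod_upt_split[of 0 "Suc c1" L g] assms(1,2) by (simp add: mmult_assoc)
  then have "mtrace B (mprod B (map g [0..<L]))
      = mtrace B (mmult B (mmult B (g c1) (mmult B (Gpow a) (mmult B (g c2) (Gpow b)))) (Gpow c1))"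
    by (simp add: mtrace_mmult_commute)
  also have "\<dots> = mtrace B (mmult B (Gpow (b + c1)) (mmult B (g c1) (mmult B (Gpow a) (g c2))))"
    by (subst mtrace_mmult_commute) (simp add: mmult_assoc mmult_Gpow flip: mmult_assoc[of B _ _ "Gpow c1"])
  also have "\<dots> \<le> k * mtrace B (Gpow (b + c1 + a))"
    using mtrace_sandwich_bound[of "g c1" k "g c2"] g \<open>0 \<le> k\<close> by (meson abs_le_D1)
  also have "b + c1 + a = L - 2"
    unfolding a_def b_def using assms(1,2) by simp
  finally show ?thesis .
qed

end


lemma flip_flip [simp]: "flip F (flip F s) = s"
  by (simp add: flip_def)

lemma flip_empty [simp]: "flip {} s = s"
  by (simp add: flip_def)

lemma flip_neq: "i \<in> F \<Longrightarrow> flip F s \<noteq> s"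
  by (auto simp: flip_def fun_eq_iff)

lemma flip_in_basis_states: "F \<subseteq> {..<n} \<Longrightarrow> s \<in> basis_states n \<Longrightarrow> flip F s \<in> basis_states n"
  by (auto simp: flip_def basis_states_def)

lemma finite_basis_states: "finite (basis_states n)"
proof -
  have "s = (\<lambda>i. i \<in> {i. i < n \<and> s i})" if "s \<in> basis_states n" for s
    using that by (auto simp: basis_states_def fun_eq_iff) (meson not_le)
  then have "basis_states n \<subseteq> (\<lambda>A i. i \<in> A) ` Pow {..<n}"
    by blast
  then show ?thesis
    by (rule finite_subset) simp
qed

lemma sum_basis_states_flip:
  "F \<subseteq> {..<n} \<Longrightarrow> (\<Sum>s\<in>basis_states n. h (flip F s)) = (\<Sum>s\<in>basis_states n. h s)"
  by (rule sum.reindex_bij_witness[of _ "flip F" "flip F"]) (auto simp: flip_in_basis_states)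

fun valid_op :: "nat \<Rightarrow> trot_op \<Rightarrow> bool" where
  "valid_op n (OneQ i) \<longleftrightarrow> i < n"
| "valid_op n (TwoQ i j) \<longleftrightarrow> i < j \<and> j < n"

lemma valid_op_acts: "valid_op n ot \<Longrightarrow> acts ot \<subseteq> {..<n}"
  by (cases ot) auto

lemma valid_op_Cseq: "ot \<in> set (Cseq n) \<Longrightarrow> valid_op n ot"
  by (auto simp: Cseq_def qpairs_def)

lemma valid_op_ops: "ot \<in> set (ops n L) \<Longrightarrow> valid_op n ot"
  using valid_op_Cseq by (auto simp: ops_def split: if_splits)

lemma elem_commute: "elem \<delta> a b d ot s t = elem \<delta> a b d ot t s"
proof (cases ot)
  case (TwoQ i j)
  have "t = flip {i, j} s \<longleftrightarrow> s = flip {i, j} t" by auto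
  moreover have "t = flip {i, j} s \<Longrightarrow> (s i = s j) = (t i = t j)" by (auto simp: flip_def)
  ultimately show ?thesis using TwoQ by auto
qed auto

lemma sq_add_scaled_le:
  fixes x y w \<delta> :: real
  assumes "0 \<le> \<delta>" "0 \<le> w" "w \<le> 1"
  shows "(x + \<delta> * w * y)\<^sup>2 \<le> (1 + \<delta>) * x\<^sup>2 + (\<delta> + \<delta>\<^sup>2) * y\<^sup>2"
proof -
  have "2 * x * y \<le> x\<^sup>2 + y\<^sup>2"
    using zero_le_power2[of "x - y"] by (simp add: power2_diff)
  then have "w * (2 * x * y) \<le> w * (x\<^sup>2 + y\<^sup>2)"
    using assms(2) by (rule mult_left_mono)
  also have "\<dots> \<le> x\<^sup>2 + y\<^sup>2"
    using assms(2,3) by (simp add: mult_left_le_one_le)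
  finally have xy: "2 * w * x * y \<le> x\<^sup>2 + y\<^sup>2"
    by (simp add: algebra_simps)
  have w2: "w\<^sup>2 * y\<^sup>2 \<le> y\<^sup>2"
    using assms(2,3) by (simp add: mult_left_le_one_le power_le_one)
  have "(x + \<delta> * w * y)\<^sup>2 = x\<^sup>2 + \<delta> * (2 * w * x * y) + \<delta>\<^sup>2 * (w\<^sup>2 * y\<^sup>2)"
    by (simp add: power2_eq_square algebra_simps)
  also have "\<dots> \<le> x\<^sup>2 + \<delta> * (x\<^sup>2 + y\<^sup>2) + \<delta>\<^sup>2 * y\<^sup>2"
    using xy w2 assms(1) by (intro add_mono mult_left_mono) auto
  finally show ?thesis
    by (simp add: algebra_simps)
qed

lemma sq_add_scaled_ge:
  fixes x y w \<delta> :: real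
  assumes "0 \<le> \<delta>" "0 \<le> w"
  shows "x\<^sup>2 - \<delta> * w * x\<^sup>2 - \<delta> * w * y\<^sup>2 + \<delta>\<^sup>2 * w\<^sup>2 * y\<^sup>2 \<le> (x + \<delta> * w * y)\<^sup>2"
proof -
  have "- (x\<^sup>2 + y\<^sup>2) \<le> 2 * x * y"
    using zero_le_power2[of "x + y"] by (simp add: power2_sum)
  then have "\<delta> * (w * - (x\<^sup>2 + y\<^sup>2)) \<le> \<delta> * (w * (2 * x * y))"
    using assms by (intro mult_left_mono) auto
  then show ?thesis
    by (simp add: power2_eq_square algebra_simps)
qed

locale trotter =
  fixes n L :: nat and \<delta> :: real and a b :: "nat \<Rightarrow> nat \<Rightarrow> real" and d :: "nat \<Rightarrow> real"
  assumes n_pos: "1 \<le> n" and L_pos: "1 \<le> L" and delta_nonneg: "0 \<le> \<delta>"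
    and delta_Cseq: "real (length (Cseq n)) * \<delta> \<le> 1/2"
    and ab_bounds: "\<forall>i j. i < j \<and> j < n \<longrightarrow> \<bar>b i j\<bar> \<le> a i j \<and> a i j \<le> 1/2"
    and d_bounds: "\<forall>i<n. \<bar>d i\<bar> \<le> 1"
begin

abbreviation Bs :: "(nat \<Rightarrow> bool) set" where
  "Bs \<equiv> basis_states n"

definition op_mat :: "trot_op \<Rightarrow> (nat \<Rightarrow> bool) rmat" where
  "op_mat ot = (\<lambda>s t. if s \<in> Bs \<and> t \<in> Bs then elem \<delta> a b d ot s t else 0)"

definition flip_mat :: "nat set \<Rightarrow> (nat \<Rightarrow> bool) rmat" where
  "flip_mat F = (\<lambda>s t. if s \<in> Bs \<and> t \<in> Bs \<and> s = flip F t then 1 else 0)"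

definition pair_weight :: "nat \<Rightarrow> nat \<Rightarrow> (nat \<Rightarrow> bool) \<Rightarrow> real" where
  "pair_weight i j s = a i j + (if s i = s j then b i j else - b i j)"

lemma length_Cseq_pos: "1 \<le> length (Cseq n)"
  using n_pos by (simp add: Cseq_def)

lemma delta_le_half: "\<delta> \<le> 1/2"
  using delta_Cseq length_Cseq_pos delta_nonneg
  by (smt (verit, ccfv_threshold) mult_le_cancel_right1 of_nat_1 of_nat_mono)

lemma mat_on_op_mat [simp]: "mat_on Bs (op_mat ot)"
  by (auto simp: mat_on_def op_mat_def)

lemma mat_on_flip_mat [simp]: "mat_on Bs (flip_mat F)"
  by (auto simp: mat_on_def flip_mat_def split: if_splits)

lemma mtransp_op_mat: "mtransp (op_mat ot) = op_mat ot"
  by (auto simp: mtransp_def op_mat_def elem_commute fun_eq_iff)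

lemma mtransp_flip_mat: "mtransp (flip_mat F) = flip_mat F"
  by (auto simp: mtransp_def flip_mat_def intro!: ext)

lemma flip_mat_empty: "flip_mat {} = mone Bs"
  by (auto simp: flip_mat_def mone_def intro!: ext)

lemma mmult_op_mat_flip_mat_apply:
  "F \<subseteq> {..<n} \<Longrightarrow> s \<in> Bs \<Longrightarrow> t \<in> Bs \<Longrightarrow> mmult Bs (op_mat ot) (flip_mat F) s t = elem \<delta> a b d ot s (flip F t)"
  by (simp add: mmult_def op_mat_def flip_mat_def flip_in_basis_states finite_basis_states
      if_distrib[of "\<lambda>x. _ * x"] cong: if_cong)

lemma mvec_flip_mat:
  assumes "F \<subseteq> {..<n}" "s \<in> Bs"
  shows "mvec Bs (flip_mat F) v s = v (flip F s)"
proof -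
  have "mvec Bs (flip_mat F) v s = (\<Sum>t\<in>Bs. if t = flip F s then v t else 0)"
    unfolding mvec_def flip_mat_def using assms by (intro sum.cong refl) auto
  then show ?thesis
    using assms by (simp add: finite_basis_states flip_in_basis_states)
qed

lemma norm_sq_le_flip_mat: "F \<subseteq> {..<n} \<Longrightarrow> norm_sq_le Bs (flip_mat F) 1"
  unfolding norm_sq_le_def vnorm_sq_def
  by (simp add: mvec_flip_mat sum_basis_states_flip[of F n "\<lambda>s. (v s)\<^sup>2" for v])

lemma mvec_op_mat_OneQ:
  "s \<in> Bs \<Longrightarrow> mvec Bs (op_mat (OneQ i)) v s = (1 - \<delta> * d i * (if s i then -1 else 1)) * v s"
  by (simp add: mvec_def op_mat_def finite_basis_states if_distrib[of "\<lambda>x. x * _"] cong: if_cong)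

lemma norm_sq_bounds_OneQ:
  assumes "i < n"
  shows "norm_sq_le Bs (op_mat (OneQ i)) ((1 + \<delta>)\<^sup>2) \<and> norm_sq_ge Bs (op_mat (OneQ i)) ((1 - \<delta>)\<^sup>2)"
proof -
  have factor: "(1 - \<delta>)\<^sup>2 \<le> (1 - e)\<^sup>2 \<and> (1 - e)\<^sup>2 \<le> (1 + \<delta>)\<^sup>2" if "\<bar>e\<bar> \<le> \<delta>" for e
    using that delta_le_half by (simp add: abs_le_square_iff[symmetric] power2_le_iff_abs_le abs_le_iff)
  have "\<bar>\<delta> * d i * (if s i then -1 else 1)\<bar> \<le> \<delta>" for s
    using d_bounds assms delta_nonneg by (simp add: abs_mult mult_left_le)
  note factor[OF this]
  then show ?thesis
    unfolding norm_sq_le_def norm_sq_ge_def vnorm_sq_def sum_distrib_left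
    by (auto intro!: sum_mono simp: mvec_op_mat_OneQ power_mult_distrib mult_right_mono)
qed

lemma pair_weight_flip: "i \<noteq> j \<Longrightarrow> pair_weight i j (flip {i, j} s) = pair_weight i j s"
  by (simp add: pair_weight_def flip_def)

lemma pair_weight_range: "i < j \<Longrightarrow> j < n \<Longrightarrow> 0 \<le> pair_weight i j s \<and> pair_weight i j s \<le> 1"
  using ab_bounds by (fastforce simp: pair_weight_def abs_le_iff)

lemma mvec_op_mat_TwoQ:
  assumes "s \<in> Bs" "i < j" "j < n"
  shows "mvec Bs (op_mat (TwoQ i j)) v s = v s + \<delta> * pair_weight i j s * v (flip {i, j} s)"
proof -
  have "flip {i, j} s \<in> Bs" "flip {i, j} s \<noteq> s"
    using assms flip_in_basis_states[of "{i, j}" n s] flip_neq[of i "{i, j}" s] by auto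
  then have "mvec Bs (op_mat (TwoQ i j)) v s
      = (\<Sum>t\<in>Bs. (if t = s then v s else 0) + (if t = flip {i, j} s then \<delta> * pair_weight i j s * v t else 0))"
    unfolding mvec_def op_mat_def using assms by (intro sum.cong refl) (auto simp: pair_weight_def)
  then show ?thesis
    using assms \<open>flip {i, j} s \<in> Bs\<close> by (simp add: finite_basis_states sum.distrib)
qed

end

context trotter
begin

lemma norm_sq_le_op_mat_TwoQ:
  assumes "i < j" "j < n"
  shows "norm_sq_le Bs (op_mat (TwoQ i j)) ((1 + \<delta>)\<^sup>2)"
  unfolding norm_sq_le_def
proof
  fix v
  have flip_ij: "{i, j} \<subseteq> {..<n}" using assms by auto
  have "vnorm_sq Bs (mvec Bs (op_mat (TwoQ i j)) v)
      = (\<Sum>s\<in>Bs. (v s + \<delta> * pair_weight i j s * v (flip {i, j} s))\<^sup>2)"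
    unfolding vnorm_sq_def using assms by (intro sum.cong refl) (simp add: mvec_op_mat_TwoQ)
  also have "\<dots> \<le> (\<Sum>s\<in>Bs. (1 + \<delta>) * (v s)\<^sup>2 + (\<delta> + \<delta>\<^sup>2) * (v (flip {i, j} s))\<^sup>2)"
    using pair_weight_range[OF assms] delta_nonneg by (intro sum_mono sq_add_scaled_le) auto
  also have "\<dots> = (1 + \<delta>) * vnorm_sq Bs v + (\<delta> + \<delta>\<^sup>2) * (\<Sum>s\<in>Bs. (v (flip {i, j} s))\<^sup>2)"
    by (simp add: sum.distrib sum_distrib_left vnorm_sq_def)
  also have "(\<Sum>s\<in>Bs. (v (flip {i, j} s))\<^sup>2) = vnorm_sq Bs v"
    unfolding vnorm_sq_def by (rule sum_basis_states_flip[OF flip_ij])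
  finally show "vnorm_sq Bs (mvec Bs (op_mat (TwoQ i j)) v) \<le> (1 + \<delta>)\<^sup>2 * vnorm_sq Bs v"
    by (simp add: power2_eq_square algebra_simps)
qed

lemma norm_sq_ge_op_mat_TwoQ:
  assumes "i < j" "j < n"
  shows "norm_sq_ge Bs (op_mat (TwoQ i j)) ((1 - \<delta>)\<^sup>2)"
  unfolding norm_sq_ge_def
proof
  fix v
  let ?w = "pair_weight i j" and ?f = "flip {i, j}"
  have flip_ij: "{i, j} \<subseteq> {..<n}" using assms by auto
  \<comment> \<open>the flipped terms are moved to unflipped positions, using that the weight is flip invariant\<close>
  have flip_w: "(\<Sum>s\<in>Bs. ?w s * (v (?f s))\<^sup>2) = (\<Sum>s\<in>Bs. ?w s * (v s)\<^sup>2)"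
    using sum_basis_states_flip[OF flip_ij, of "\<lambda>s. ?w s * (v s)\<^sup>2"] assms by (simp add: pair_weight_flip)
  have flip_w2: "(\<Sum>s\<in>Bs. (?w s)\<^sup>2 * (v (?f s))\<^sup>2) = (\<Sum>s\<in>Bs. (?w s)\<^sup>2 * (v s)\<^sup>2)"
    using sum_basis_states_flip[OF flip_ij, of "\<lambda>s. (?w s)\<^sup>2 * (v s)\<^sup>2"] assms by (simp add: pair_weight_flip)
  have "(1 - \<delta>)\<^sup>2 * vnorm_sq Bs v \<le> (\<Sum>s\<in>Bs. (1 - \<delta> * ?w s)\<^sup>2 * (v s)\<^sup>2)"
    unfolding vnorm_sq_def sum_distrib_left
  proof (intro sum_mono mult_right_mono)
    fix s
    have "\<delta> * ?w s \<le> \<delta>"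
      using pair_weight_range[OF assms, of s] delta_nonneg by (simp add: mult_left_le)
    then show "(1 - \<delta>)\<^sup>2 \<le> (1 - \<delta> * ?w s)\<^sup>2"
      using delta_le_half by (intro power_mono) auto
  qed simp
  also have "\<dots> = (\<Sum>s\<in>Bs. (v s)\<^sup>2 - \<delta> * ?w s * (v s)\<^sup>2 - \<delta> * ?w s * (v s)\<^sup>2
      + \<delta>\<^sup>2 * (?w s)\<^sup>2 * (v s)\<^sup>2)"
    by (intro sum.cong refl) (simp add: power2_eq_square algebra_simps)
  also have "\<dots> = (\<Sum>s\<in>Bs. (v s)\<^sup>2 - \<delta> * ?w s * (v s)\<^sup>2 - \<delta> * ?w s * (v (?f s))\<^sup>2
      + \<delta>\<^sup>2 * (?w s)\<^sup>2 * (v (?f s))\<^sup>2)"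
    using flip_w flip_w2
    by (simp add: sum.distrib sum_subtractf mult.assoc flip: sum_distrib_left) (simp add: mult.commute)
  also have "\<dots> \<le> (\<Sum>s\<in>Bs. (v s + \<delta> * ?w s * v (?f s))\<^sup>2)"
    using pair_weight_range[OF assms] delta_nonneg by (intro sum_mono sq_add_scaled_ge) auto
  also have "\<dots> = vnorm_sq Bs (mvec Bs (op_mat (TwoQ i j)) v)"
    unfolding vnorm_sq_def using assms by (intro sum.cong refl) (simp add: mvec_op_mat_TwoQ)
  finally show "(1 - \<delta>)\<^sup>2 * vnorm_sq Bs v \<le> vnorm_sq Bs (mvec Bs (op_mat (TwoQ i j)) v)" .
qed

lemma norm_sq_bounds_op_mat:
  "valid_op n ot \<Longrightarrow> norm_sq_le Bs (op_mat ot) ((1 + \<delta>)\<^sup>2) \<and> norm_sq_ge Bs (op_mat ot) ((1 - \<delta>)\<^sup>2)"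
  by (cases ot) (auto simp: norm_sq_bounds_OneQ norm_sq_le_op_mat_TwoQ norm_sq_ge_op_mat_TwoQ)

end

lemma nth_concat_replicate:
  "m < L * length xs \<Longrightarrow> concat (replicate L xs) ! m = xs ! (m mod length xs)"
proof (induction L arbitrary: m)
  case (Suc L)
  show ?case
  proof (cases "m < length xs")
    case False
    then have "m - length xs < L * length xs" using Suc.prems by auto
    then show ?thesis using False Suc.IH by (simp add: nth_append le_mod_geq)
  qed (simp add: nth_append)
qed simp

lemma map_upt_blocks:
  "map f [0..<L * K] = concat (map (\<lambda>j. map (\<lambda>k. f (j * K + k)) [0..<K]) [0..<L])"
proof (induction L)
  case (Suc L)
  have "[0..<Suc L * K] = [0..<L * K] @ [L * K..<L * K + K]"
    using upt_add_eq_append[of 0 "L * K" K] by (simp add: add.commute)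
  moreover have "map f [L * K..<L * K + K] = map (\<lambda>k. f (L * K + k)) [0..<K]"
    by (rule nth_equalityI) auto
  ultimately show ?case
    using Suc by simp
qed simp

context trotter
begin

abbreviation Cs :: "trot_op list" where
  "Cs \<equiv> Cseq n"

abbreviation Cstep :: "trot_op list" where
  "Cstep \<equiv> Cs @ rev Cs"

abbreviation Kstep :: nat where
  "Kstep \<equiv> length Cstep"

abbreviation Os :: "trot_op list" where
  "Os \<equiv> ops n L"

abbreviation M :: nat where
  "M \<equiv> length Os"

definition heads :: "(nat \<times> nat) set \<Rightarrow> nat \<Rightarrow> nat set" where
  "heads S m = {q. (m, q) \<in> S}"

definition worm_mats :: "(nat \<times> nat) set \<Rightarrow> (nat \<Rightarrow> bool) rmat list" where
  "worm_mats S = map (\<lambda>m. mmult Bs (op_mat (Os ! m)) (flip_mat (heads S m))) [0..<M]"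

definition block_mats :: "(nat \<times> nat) set \<Rightarrow> nat \<Rightarrow> (nat \<Rightarrow> bool) rmat list" where
  "block_mats S j = map (\<lambda>k. mmult Bs (op_mat (Cstep ! k)) (flip_mat (heads S (j * Kstep + k)))) [0..<Kstep]"

definition Cmat :: "(nat \<Rightarrow> bool) rmat" where
  "Cmat = mprod Bs (map op_mat Cs)"

lemma length_ops: "M = L * Kstep"
  by (simp add: ops_def length_concat sum_list_replicate)

lemma Kstep_pos: "0 < Kstep"
  using length_Cseq_pos by (cases Cs) auto

lemma M_pos: "0 < M"
  using length_ops Kstep_pos L_pos by simp

lemma ops_nth: "m < M \<Longrightarrow> Os ! m = Cstep ! (m mod Kstep)"
  unfolding ops_def by (rule nth_concat_replicate) (simp add: length_ops[unfolded ops_def])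

lemma worm_mats_blocks: "worm_mats S = concat (map (block_mats S) [0..<L])"
proof -
  have "Os ! (j * Kstep + k) = Cstep ! k" if "j < L" "k < Kstep" for j k
  proof -
    have "j * Kstep + k < Suc j * Kstep" using that by simp
    also have "\<dots> \<le> L * Kstep" using that by (intro mult_right_mono) auto
    also have "\<dots> = M" by (simp add: length_ops)
    finally show ?thesis using ops_nth that by simp
  qed
  then show ?thesis
    unfolding worm_mats_def block_mats_def length_ops map_upt_blocks
    by (intro arg_cong[where f = concat] map_cong refl) auto
qed

lemma mprod_worm_mats: "mprod Bs (worm_mats S) = mprod Bs (map (\<lambda>j. mprod Bs (block_mats S j)) [0..<L])"
  by (simp add: worm_mats_blocks mprod_concat finite_basis_states comp_def)

lemma mat_on_Cmat: "mat_on Bs Cmat"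
  by (simp add: Cmat_def)

end

sublocale trotter \<subseteq> step: gram "basis_states n" "trotter.Cmat n \<delta> a b d"
  by unfold_locales (simp_all add: finite_basis_states mat_on_Cmat)

context trotter
begin

lemma mtransp_Cmat: "mtransp Cmat = mprod Bs (rev (map op_mat Cs))"
proof -
  have "map mtransp (map op_mat Cs) = map op_mat Cs"
    by (simp add: mtransp_op_mat)
  then show ?thesis
    unfolding Cmat_def mtransp_mprod[OF finite_basis_states] by (simp only:)
qed

lemma mprod_block_mats_Gram:
  assumes "\<And>k. k < Kstep \<Longrightarrow> heads S (j * Kstep + k) = {}"
  shows "mprod Bs (block_mats S j) = step.Gram"
proof -
  have "block_mats S j = map op_mat Cstep"
    unfolding block_mats_def using assms
    by (intro nth_equalityI) (simp_all add: flip_mat_empty mmult_mone_right finite_basis_states del: map_append)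
  then have "mprod Bs (block_mats S j) = mmult Bs Cmat (mtransp Cmat)"
    by (simp add: mprod_append finite_basis_states mtransp_Cmat flip: Cmat_def rev_map)
  then show ?thesis
    by (simp add: step.Gram_def)
qed

lemma mprod_worm_mats_empty: "mprod Bs (worm_mats {}) = step.Gpow L"
  using step.mprod_upt_Gram[of 0 L "\<lambda>j. mprod Bs (block_mats {} j)"]
  by (simp add: mprod_worm_mats mprod_block_mats_Gram heads_def)

lemma heads_subset:
  assumes "S \<subseteq> segs n L"
  shows "heads S m \<subseteq> {..<n}"
proof
  fix q
  assume "q \<in> heads S m"
  then have "m < M" "q \<in> acts (Os ! m)"
    using assms by (auto simp: heads_def segs_def)
  then show "q \<in> {..<n}"
    using valid_op_acts valid_op_ops nth_mem by blast
qed

end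

context trotter
begin

lemma valid_op_Cstep: "k < Kstep \<Longrightarrow> valid_op n (Cstep ! k)"
  using nth_mem[of k Cstep] valid_op_Cseq by auto

lemma norm_sq_le_block:
  assumes "S \<subseteq> segs n L"
  shows "norm_sq_le Bs (mprod Bs (block_mats S j)) (((1 + \<delta>)\<^sup>2) ^ Kstep)"
    and "norm_sq_le Bs (mtransp (mprod Bs (block_mats S j))) (((1 + \<delta>)\<^sup>2) ^ Kstep)"
proof -
  have flip_mat: "norm_sq_le Bs (flip_mat (heads S m)) 1" for m
    by (rule norm_sq_le_flip_mat[OF heads_subset[OF assms]])
  have op_mat: "norm_sq_le Bs (op_mat (Cstep ! k)) ((1 + \<delta>)\<^sup>2)" if "k < Kstep" for k
    using norm_sq_bounds_op_mat[OF valid_op_Cstep[OF that]] by blast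
  have "\<forall>A\<in>set (block_mats S j). norm_sq_le Bs A ((1 + \<delta>)\<^sup>2)"
    using norm_sq_le_mmult[OF op_mat flip_mat] by (auto simp: block_mats_def)
  from norm_sq_le_mprod[OF finite_basis_states this]
  show "norm_sq_le Bs (mprod Bs (block_mats S j)) (((1 + \<delta>)\<^sup>2) ^ Kstep)"
    by (simp add: block_mats_def)
  have "\<forall>A\<in>set (rev (map mtransp (block_mats S j))). norm_sq_le Bs A ((1 + \<delta>)\<^sup>2)"
    using norm_sq_le_mmult[OF flip_mat op_mat]
    by (auto simp: block_mats_def mtransp_mmult mtransp_op_mat mtransp_flip_mat)
  from norm_sq_le_mprod[OF finite_basis_states this]
  show "norm_sq_le Bs (mtransp (mprod Bs (block_mats S j))) (((1 + \<delta>)\<^sup>2) ^ Kstep)"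
    by (simp add: block_mats_def mtransp_mprod finite_basis_states)
qed

lemma norm_sq_ge_mtransp_Cmat: "norm_sq_ge Bs (mtransp Cmat) (((1 - \<delta>)\<^sup>2) ^ length Cs)"
  using norm_sq_ge_mprod[OF finite_basis_states, where As = "rev (map op_mat Cs)" and K = "(1 - \<delta>)\<^sup>2"]
    norm_sq_bounds_op_mat valid_op_Cseq
  by (simp add: mtransp_Cmat)

lemma one_minus_delta_pow_ge: "1/2 \<le> (1 - \<delta>) ^ length Cs"
  using Bernoulli_inequality[of "- \<delta>" "length Cs"] delta_le_half delta_Cseq by simp

lemma one_plus_delta_pow_le: "(1 + \<delta>) ^ length Cs \<le> 2"
proof -
  have "(1 + \<delta>) ^ length Cs * (1 - \<delta>) ^ length Cs = (1 - \<delta>\<^sup>2) ^ length Cs"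
    by (simp add: power_mult_distrib[symmetric] power2_eq_square algebra_simps)
  also have "\<dots> \<le> 1"
    using delta_le_half delta_nonneg by (intro power_le_one) (auto simp: power2_eq_square mult_le_one)
  finally have "(1 + \<delta>) ^ length Cs * (1 - \<delta>) ^ length Cs \<le> 1" .
  moreover have "(1 + \<delta>) ^ length Cs * (1/2) \<le> (1 + \<delta>) ^ length Cs * (1 - \<delta>) ^ length Cs"
    using one_minus_delta_pow_ge delta_nonneg by (intro mult_left_mono) auto
  ultimately show ?thesis
    by linarith
qed

lemma block_norm_sq_bound: "((1 + \<delta>)\<^sup>2) ^ Kstep \<le> 16"
proof -
  have "((1 + \<delta>)\<^sup>2) ^ Kstep = ((1 + \<delta>) ^ length Cs) ^ 4"
    by (simp flip: power_mult) (simp add: mult.commute)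
  also have "\<dots> \<le> 2 ^ 4"
    using one_plus_delta_pow_le delta_nonneg by (intro power_mono) auto
  finally show ?thesis by simp
qed

lemma mtrace_Gpow_le_add: "mtrace Bs (step.Gpow m) \<le> 4 ^ k * mtrace Bs (step.Gpow (m + k))"
proof -
  define l where "l = ((1 - \<delta>)\<^sup>2) ^ length Cs"
  have "(1/2)\<^sup>2 \<le> ((1 - \<delta>) ^ length Cs)\<^sup>2"
    using one_minus_delta_pow_ge by (intro power_mono) auto
  moreover have "((1 - \<delta>) ^ length Cs)\<^sup>2 = l"
    unfolding l_def by (simp flip: power_mult add: mult.commute)
  ultimately have "1/4 \<le> l"
    by (simp add: power2_eq_square)
  then have "(1/4) ^ k * mtrace Bs (step.Gpow m) \<le> l ^ k * mtrace Bs (step.Gpow m)"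
    by (intro mult_right_mono power_mono step.mtrace_Gpow_nonneg) auto
  also have "\<dots> \<le> mtrace Bs (step.Gpow (m + k))"
    using step.mtrace_Gpow_add_ge[OF norm_sq_ge_mtransp_Cmat[folded l_def]] \<open>1/4 \<le> l\<close> by simp
  finally show ?thesis
    by (simp add: field_simps power_divide)
qed

end

lemma length_qpairs: "2 * length (qpairs n) + n = n * n"
proof -
  have "length (qpairs n) = (\<Sum>i<n. n - Suc i)"
    by (simp add: qpairs_def length_concat sum_list_sum_nth atLeast0LessThan comp_def)
  moreover have "2 * (\<Sum>i<n. n - Suc i) + n = n * n"
  proof (induction n)
    case (Suc n)
    have "(\<Sum>i<Suc n. Suc n - Suc i) = (\<Sum>i<n. n - i)"
      by (simp add: sum.lessThan_Suc)
    also have "\<dots> = (\<Sum>i<n. (n - Suc i) + 1)"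
      by (intro sum.cong refl) auto
    also have "\<dots> = (\<Sum>i<n. n - Suc i) + n"
      by (simp only: sum.distrib) simp
    finally have "(\<Sum>i<Suc n. Suc n - Suc i) = (\<Sum>i<n. n - Suc i) + n" .
    then show ?case
      using Suc by simp
  qed simp
  ultimately show ?thesis
    by simp
qed

fun op_size :: "trot_op \<Rightarrow> nat" where
  "op_size (OneQ i) = 1"
| "op_size (TwoQ i j) = 2"

lemma card_acts: "valid_op n ot \<Longrightarrow> card (acts ot) = op_size ot"
  by (cases ot) auto

lemma sum_list_concat_replicate:
  fixes h :: "'a \<Rightarrow> nat"
  shows "sum_list (map h (concat (replicate L xs))) = L * sum_list (map h xs)"
  by (induction L) auto

lemma sum_list_op_size:
  "sum_list (map op_size xs) = length (filter is_one xs) + 2 * length (filter (\<lambda>x. \<not> is_one x) xs)"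
proof (induction xs)
  case (Cons x xs)
  then show ?case by (cases x) auto
qed simp

context trotter
begin

lemma M1_plus_2M2: "M1 n L + 2 * M2 n L = 2 * L * (n * n)"
proof -
  have "M1 n L + 2 * M2 n L = L * sum_list (map op_size Cstep)"
    unfolding M1_def M2_def sum_list_op_size[symmetric] ops_def by (rule sum_list_concat_replicate)
  also have "sum_list (map op_size Cstep) = 2 * sum_list (map op_size Cs)"
    by (simp add: rev_map[symmetric] sum_list_rev)
  also have "sum_list (map op_size Cs) = 2 * length (qpairs n) + n"
    by (simp add: Cseq_def comp_def split_beta sum_list_triv)
  finally show ?thesis
    using length_qpairs[of n] by simp
qed

lemma finite_segs: "finite (segs n L)"
proof -
  have "segs n L \<subseteq> {..<M} \<times> {..<n}"
    using heads_subset[of "segs n L"] by (auto simp: segs_def heads_def)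
  then show ?thesis
    by (rule finite_subset) auto
qed

lemma card_segs: "card (segs n L) = M1 n L + 2 * M2 n L"
proof -
  have "segs n L = (SIGMA m:{..<M}. acts (Os ! m))"
    by (auto simp: segs_def)
  moreover have "finite (acts ot)" for ot
    by (cases ot) auto
  ultimately have "card (segs n L) = (\<Sum>m<M. card (acts (Os ! m)))"
    by simp
  also have "\<dots> = (\<Sum>m<M. op_size (Os ! m))"
    by (intro sum.cong refl) (metis card_acts lessThan_iff nth_mem valid_op_ops)
  also have "\<dots> = M1 n L + 2 * M2 n L"
    by (simp add: sum_list_sum_nth atLeast0LessThan M1_def M2_def flip: sum_list_op_size)
  finally show ?thesis .
qed

lemma configs_eq: "configs n L = {xs. set xs \<subseteq> Bs \<and> length xs = M}"
  by (auto simp: configs_def)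

lemma finite_configs: "finite (configs n L)"
  unfolding configs_eq by (rule finite_lists_length_eq[OF finite_basis_states])

lemma sum_W2_eq_mtrace:
  assumes "S \<subseteq> segs n L"
  shows "(\<Sum>xs\<in>configs n L. W2 n L \<delta> a b d S xs) = mtrace Bs (mprod Bs (worm_mats S))"
proof -
  have "worm_mats S \<noteq> []" "length (worm_mats S) = M"
    using M_pos by (simp_all add: worm_mats_def)
  then have "mtrace Bs (mprod Bs (worm_mats S))
      = (\<Sum>xs\<in>configs n L. \<Prod>m<M. (worm_mats S ! m) (xs ! m) (xs ! ((m + 1) mod M)))"
    using mtrace_mprod_eq_cyclic_sum[OF finite_basis_states] by (simp add: configs_eq)
  also have "\<dots> = (\<Sum>xs\<in>configs n L. W2 n L \<delta> a b d S xs)"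
  proof (intro sum.cong refl)
    fix xs
    assume "xs \<in> configs n L"
    then have "xs ! m \<in> Bs" if "m < M" for m
      using that by (auto simp: configs_def)
    then show "(\<Prod>m<M. (worm_mats S ! m) (xs ! m) (xs ! ((m + 1) mod M))) = W2 n L \<delta> a b d S xs"
      using M_pos mmult_op_mat_flip_mat_apply[OF heads_subset[OF assms]]
      by (simp add: W2_def worm_mats_def heads_def Let_def)
  qed
  finally show ?thesis ..
qed

lemma sum_W0_eq_mtrace: "(\<Sum>\<gamma>\<in>C0 n L \<delta> a b d. W0 n L \<delta> a b d \<gamma>) = mtrace Bs (step.Gpow L)"
proof -
  have "(\<Sum>\<gamma>\<in>C0 n L \<delta> a b d. W0 n L \<delta> a b d \<gamma>) = (\<Sum>\<gamma>\<in>configs n L. W0 n L \<delta> a b d \<gamma>)"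
    by (rule sum.mono_neutral_left[OF finite_configs]) (auto simp: C0_def)
  also have "\<dots> = (\<Sum>\<gamma>\<in>configs n L. W2 n L \<delta> a b d {} \<gamma>)"
    by (simp add: W0_def W2_def)
  finally have "(\<Sum>\<gamma>\<in>C0 n L \<delta> a b d. W0 n L \<delta> a b d \<gamma>) = (\<Sum>\<gamma>\<in>configs n L. W2 n L \<delta> a b d {} \<gamma>)" .
  then show ?thesis
    by (simp add: sum_W2_eq_mtrace mprod_worm_mats_empty)
qed

end

lemma quotient_divide_le:
  fixes P Z W c :: real
  assumes "P \<le> c * Z" "0 \<le> Z" "0 \<le> c"
  shows "(P / W) / (Z / W) \<le> c"
proof (cases "W = 0 \<or> Z = 0")
  case False
  then show ?thesis
    using assms by (simp add: divide_le_eq)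
qed (use assms in auto)

context trotter
begin

lemma mtrace_few_defects_le:
  assumes "c1 < L" "c2 < L" and Gram: "\<And>j. j < L \<Longrightarrow> j \<noteq> c1 \<Longrightarrow> j \<noteq> c2 \<Longrightarrow> g j = step.Gram"
    and g: "\<And>j. mat_on Bs (g j) \<and> norm_sq_le Bs (g j) 16 \<and> norm_sq_le Bs (mtransp (g j)) 16"
  shows "mtrace Bs (mprod Bs (map g [0..<L])) \<le> 256 * mtrace Bs (step.Gpow L)"
proof (cases "c1 = c2")
  case True
  have "mtrace Bs (mprod Bs (map g [0..<L])) \<le> 16 * mtrace Bs (step.Gpow (L - 1))"
    using assms True by (intro step.mtrace_one_defect_le[of c1]) auto
  also have "\<dots> \<le> 16 * (4 * mtrace Bs (step.Gpow L))"
    using mtrace_Gpow_le_add[of "L - 1" 1] L_pos by simp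
  finally show ?thesis
    using step.mtrace_Gpow_nonneg[of L] by simp
next
  case False
  then obtain c c' where "c < c'" "c' < L" "{c, c'} = {c1, c2}"
    using assms(1,2) by (metis insert_commute linorder_neqE_nat)
  then have "mtrace Bs (mprod Bs (map g [0..<L])) \<le> 16 * mtrace Bs (step.Gpow (L - 2))"
    using Gram g by (intro step.mtrace_two_defects_le[of c c']) auto
  also have "\<dots> \<le> 16 * (4 ^ 2 * mtrace Bs (step.Gpow (L - 2 + 2)))"
    using mtrace_Gpow_le_add[of "L - 2" 2] by simp
  also have "L - 2 + 2 = L"
    using \<open>c < c'\<close> \<open>c' < L\<close> by simp
  finally show ?thesis
    by simp
qed

lemma sum_W2_pair_le:
  assumes "S \<subseteq> segs n L" "card S = 2"
  shows "(\<Sum>xs\<in>configs n L. W2 n L \<delta> a b d S xs) \<le> 256 * mtrace Bs (step.Gpow L)"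
proof -
  obtain s1 s2 where S: "S = {s1, s2}"
    using assms(2) by (meson card_2_iff)
  \<comment> \<open>only the two factors C C^\<dagger> containing a worm head differ from the Gram matrix\<close>
  define c1 c2 where "c1 = fst s1 div Kstep" and "c2 = fst s2 div Kstep"
  have "fst s1 < L * Kstep" "fst s2 < L * Kstep"
    using assms(1) S length_ops by (auto simp: segs_def)
  then have "c1 < L" "c2 < L"
    unfolding c1_def c2_def by (simp_all add: less_mult_imp_div_less)
  have Gram: "mprod Bs (block_mats S j) = step.Gram" if "j \<noteq> c1" "j \<noteq> c2" for j
  proof (rule mprod_block_mats_Gram)
    fix k
    assume "k < Kstep"
    then have "(j * Kstep + k) div Kstep = j"
      by (metis add.commute add_cancel_right_left div_less div_mult_self1 less_nat_zero_code)
    then show "heads S (j * Kstep + k) = {}"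
      using that S unfolding heads_def c1_def c2_def by auto
  qed
  have bounded: "norm_sq_le Bs (mprod Bs (block_mats S j)) 16 \<and> norm_sq_le Bs (mtransp (mprod Bs (block_mats S j))) 16"
    for j using norm_sq_le_block[OF assms(1)] block_norm_sq_bound by (blast intro: norm_sq_le_mono)
  have "mtrace Bs (mprod Bs (map (\<lambda>j. mprod Bs (block_mats S j)) [0..<L])) \<le> 256 * mtrace Bs (step.Gpow L)"
    by (rule mtrace_few_defects_le[OF \<open>c1 < L\<close> \<open>c2 < L\<close>]) (simp_all add: Gram bounded)
  then show ?thesis
    by (simp add: sum_W2_eq_mtrace[OF assms(1)] mprod_worm_mats)
qed

lemma sum_W2_le:
  "(\<Sum>\<xi>\<in>C2 n L \<delta> a b d. W2 n L \<delta> a b d (fst \<xi>) (snd \<xi>))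
     \<le> real (card (segs n L) choose 2) * (256 * mtrace Bs (step.Gpow L))"
proof -
  define Pairs where "Pairs = {S. S \<subseteq> segs n L \<and> card S = 2}"
  have "finite Pairs"
    unfolding Pairs_def using finite_segs by simp
  then have "(\<Sum>\<xi>\<in>C2 n L \<delta> a b d. W2 n L \<delta> a b d (fst \<xi>) (snd \<xi>))
      = (\<Sum>\<xi>\<in>Pairs \<times> configs n L. W2 n L \<delta> a b d (fst \<xi>) (snd \<xi>))"
    by (intro sum.mono_neutral_left) (use finite_configs in \<open>auto simp: C2_def Pairs_def\<close>)
  also have "\<dots> = (\<Sum>S\<in>Pairs. \<Sum>xs\<in>configs n L. W2 n L \<delta> a b d S xs)"
    by (simp add: sum.cartesian_product split_beta)
  also have "\<dots> \<le> (\<Sum>S\<in>Pairs. 256 * mtrace Bs (step.Gpow L))"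
    by (intro sum_mono sum_W2_pair_le) (auto simp: Pairs_def)
  also have "\<dots> = real (card Pairs) * (256 * mtrace Bs (step.Gpow L))"
    by simp
  also have "card Pairs = card (segs n L) choose 2"
    unfolding Pairs_def by (rule n_subsets[OF finite_segs])
  finally show ?thesis .
qed

lemma pi_ratio_le:
  "(\<Sum>\<xi>\<in>C2 n L \<delta> a b d. pi2 n L \<delta> a b d \<xi>) / (\<Sum>\<xi>\<in>C0 n L \<delta> a b d. pi0 n L \<delta> a b d \<xi>)
     \<le> 512 * real L * real n ^ 2"
proof -
  define N where "N = M1 n L + 2 * M2 n L"
  define X where "X = (\<Sum>\<xi>\<in>C2 n L \<delta> a b d. W2 n L \<delta> a b d (fst \<xi>) (snd \<xi>))"
  define Z where "Z = mtrace Bs (step.Gpow L)"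
  have N: "N = 2 * L * (n * n)" "0 < N"
    unfolding N_def M1_plus_2M2 using n_pos L_pos by simp_all
  have "0 \<le> Z"
    unfolding Z_def by (rule step.mtrace_Gpow_nonneg)
  have "2 * (N choose 2) \<le> N * (N - 1)"
    unfolding choose_two by simp
  also have "\<dots> \<le> N * N"
    by simp
  finally have "2 * (N choose 2) \<le> N * N" .
  then have choose_le: "2 * real (N choose 2) \<le> real N * real N"
    by (metis of_nat_le_iff of_nat_mult of_nat_numeral)
  have "2 * X \<le> 2 * real (N choose 2) * (256 * Z)"
    using sum_W2_le unfolding X_def Z_def N_def card_segs by (simp add: mult_ac)
  also have "\<dots> \<le> real N * real N * (256 * Z)"
    using choose_le \<open>0 \<le> Z\<close> by (intro mult_right_mono) auto
  finally have "2 * X \<le> real N * real N * (256 * Z)" .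
  then have bound: "2 / real N * X \<le> 256 * real N * Z"
    using N by (simp add: field_simps)
  have pi2: "(\<Sum>\<xi>\<in>C2 n L \<delta> a b d. pi2 n L \<delta> a b d \<xi>) = 2 / real N * X / Wtotal n L \<delta> a b d"
    unfolding pi2_def X_def N_def by (simp add: sum_divide_distrib sum_distrib_left)
  have pi0: "(\<Sum>\<xi>\<in>C0 n L \<delta> a b d. pi0 n L \<delta> a b d \<xi>) = Z / Wtotal n L \<delta> a b d"
    unfolding pi0_def Z_def sum_W0_eq_mtrace[symmetric] by (rule sum_divide_distrib[symmetric])
  have "(\<Sum>\<xi>\<in>C2 n L \<delta> a b d. pi2 n L \<delta> a b d \<xi>) / (\<Sum>\<xi>\<in>C0 n L \<delta> a b d. pi0 n L \<delta> a b d \<xi>)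
      \<le> 256 * real N"
    unfolding pi2 pi0 by (rule quotient_divide_le) (use bound \<open>0 \<le> Z\<close> in auto)
  also have "\<dots> = 512 * real L * real n ^ 2"
    using N by (simp add: power2_eq_square)
  finally show ?thesis .
qed

end

lemma length_Cseq_le: "length (Cseq n) \<le> n * n"
  using length_qpairs[of n] by (simp add: Cseq_def)

lemma trotter_if_enough_steps:
  fixes \<beta> \<epsilon> :: real
  assumes "1 \<le> n" "1 \<le> \<beta>" "0 < \<epsilon>" "\<epsilon> \<le> 1"
    and "\<forall>i j. i < j \<and> j < n \<longrightarrow> \<bar>b i j\<bar> \<le> a i j \<and> a i j \<le> 1/2" "\<forall>i<n. \<bar>d i\<bar> \<le> 1"
    and L: "real n ^ 2 * \<beta> ^ 2 / \<epsilon> \<le> real L"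
  shows "trotter n L (\<beta> / (2 * real L)) a b d"
proof -
  have "real n ^ 2 * \<beta> \<le> real n ^ 2 * (\<beta> ^ 2 / \<epsilon>)"
    using assms(2-4) by (intro mult_left_mono) (auto simp: power2_eq_square le_divide_eq mult_le_cancel_left1)
  with L have nL: "real n ^ 2 * \<beta> \<le> real L"
    by simp
  have "1 \<le> real n ^ 2"
    using assms(1) by simp
  then have "1 \<le> real n ^ 2 * \<beta>"
    using assms(2) by (metis mult_mono' mult_1 zero_le_one)
  then have "0 < real L"
    using nL by linarith
  have "real (length (Cseq n)) * \<beta> \<le> real n ^ 2 * \<beta>"
    using length_Cseq_le[of n] assms(2)
    by (intro mult_right_mono) (auto simp: power2_eq_square simp flip: of_nat_mult)
  then have "real (length (Cseq n)) * (\<beta> / (2 * real L)) \<le> 1/2"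
    using nL \<open>0 < real L\<close> by (simp add: field_simps)
  then show ?thesis
    using assms \<open>0 < real L\<close> by unfold_locales auto
qed

lemma pi_ratio_bound:
  fixes \<beta> \<epsilon> c :: real
  assumes "1 \<le> n" "1 \<le> \<beta>" "0 < \<epsilon>" "\<epsilon> \<le> 1"
    and "\<forall>i j. i < j \<and> j < n \<longrightarrow> \<bar>b i j\<bar> \<le> a i j \<and> a i j \<le> 1/2" "\<forall>i<n. \<bar>d i\<bar> \<le> 1"
    and "real n ^ 2 * \<beta> ^ 2 / \<epsilon> \<le> real L" "real L \<le> c * real n ^ 2 * \<beta> ^ 2 / \<epsilon>"
  shows "(\<Sum>\<xi>\<in>C2 n L (\<beta> / (2 * real L)) a b d. pi2 n L (\<beta> / (2 * real L)) a b d \<xi>)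
      / (\<Sum>\<xi>\<in>C0 n L (\<beta> / (2 * real L)) a b d. pi0 n L (\<beta> / (2 * real L)) a b d \<xi>)
      \<le> 512 * c * real n ^ 4 * \<beta> ^ 2 / \<epsilon>"
proof -
  interpret trotter n L "\<beta> / (2 * real L)" a b d
    using assms(1-7) by (rule trotter_if_enough_steps)
  have "(\<Sum>\<xi>\<in>C2 n L (\<beta> / (2 * real L)) a b d. pi2 n L (\<beta> / (2 * real L)) a b d \<xi>)
      / (\<Sum>\<xi>\<in>C0 n L (\<beta> / (2 * real L)) a b d. pi0 n L (\<beta> / (2 * real L)) a b d \<xi>)
      \<le> 512 * real L * real n ^ 2"
    by (rule pi_ratio_le)
  also have "\<dots> \<le> 512 * (c * real n ^ 2 * \<beta> ^ 2 / \<epsilon>) * real n ^ 2"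
    using assms(8) by (intro mult_right_mono) auto
  also have "\<dots> = 512 * c * real n ^ 4 * \<beta> ^ 2 / \<epsilon>"
    by (simp add: power2_eq_square power4_eq_xxxx)
  finally show ?thesis .
qed

theorem lemma2:
  shows "\<forall>c > 0. \<exists>K. \<forall>(n::nat) (\<beta>::real) (\<epsilon>::real) (L::nat)
           (a::nat \<Rightarrow> nat \<Rightarrow> real) (b::nat \<Rightarrow> nat \<Rightarrow> real) (d::nat \<Rightarrow> real).
     n \<ge> 1 \<and> \<beta> \<ge> 1 \<and> \<epsilon> > 0 \<and> \<epsilon> \<le> 1
     \<and> (\<forall>i j. i < j \<and> j < n \<longrightarrow> \<bar>b i j\<bar> \<le> a i j \<and> a i j \<le> 1/2)
     \<and> (\<forall>i < n. \<bar>d i\<bar> \<le> 1)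
     \<and> real n ^ 2 * \<beta> ^ 2 / \<epsilon> \<le> real L
     \<and> real L \<le> c * real n ^ 2 * \<beta> ^ 2 / \<epsilon>
     \<longrightarrow> (\<Sum>\<xi>\<in>C2 n L (\<beta> / (2 * real L)) a b d. pi2 n L (\<beta> / (2 * real L)) a b d \<xi>)
         / (\<Sum>\<xi>\<in>C0 n L (\<beta> / (2 * real L)) a b d. pi0 n L (\<beta> / (2 * real L)) a b d \<xi>)
         \<le> K * real n ^ 4 * \<beta> ^ 2 / \<epsilon>"
  using pi_ratio_bound by blast

end
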